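(* Let $u_1u_2u_3u_4$ be a geodesic word in $\Gamma_2$ (each $u_j$ a generator) which belongs to $\mathcal R$. Let $y\in\Gamma_2$, $y\ne e$, with $u_1u_2u_3u_4\in\mathcal C(y)$. Then: (1) if $z$ is a word such that $u_1u_2u_3u_4z$ is geodesic, then for every geodesic word $w_1\cdots w_J$ representing $y$, the word $w_1\cdots w_Ju_1u_2u_3u_4z$ is geodesic; (2) $\mathcal C(u_1u_2u_3u_4)=\mathcal C(yu_1u_2u_3u_4)$.
   Context: $\Gamma_2=\langle a,b,c,d\mid aba^{-1}b^{-1}cdc^{-1}d^{-1}\rangle$ with symmetric generating set $A=\{a^{\pm1},b^{\pm1},c^{\pm1},d^{\pm1}\}$ and word length $|\cdot|$. A word in $A$ is geodesic if the element it represents has length equal to the number of letters. The cone type of $x\in\Gamma_2$ is $\mathcal C(x)=\{z\in\Gamma_2:\ |xz|=|x|+|z|\}$; a word belongs to $\mathcal C(x)$ if the element it represents does. A word belongs to $\mathcal R$ if it is a nonempty subword of length at most $4$ of a cyclic permutation of the relator $aba^{-1}b^{-1}cdc^{-1}d^{-1}$ or of its inverse $dcd^{-1}c^{-1}bab^{-1}a^{-1}$; a group element belongs to $\mathcal R$ if it is represented by such a word. *)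

theory Defs
  imports Main
begin

text \<open>Genus-2 surface group as words over the symmetric generating set modulo
  the congruence generated by free cancellation and the relator.\<close>

datatype gen = Ga | Gb | Gc | Gd

type_synonym letter = "gen \<times> bool"   \<comment> \<open>(g, True) = g, (g, False) = g^-1\<close>
type_synonym word = "letter list"

definition linv :: "letter \<Rightarrow> letter" where
  "linv x = (fst x, \<not> snd x)"

definition relator :: word where
  "relator = [(Ga,True),(Gb,True),(Ga,False),(Gb,False),(Gc,True),(Gd,True),(Gc,False),(Gd,False)]"

definition relator_inv :: word where
  "relator_inv = [(Gd,True),(Gc,True),(Gd,False),(Gc,False),(Gb,True),(Ga,True),(Gb,False),(Ga,False)]"

inductive rstep :: "word \<Rightarrow> word \<Rightarrow> bool" where
  free: "rstep (u @ [x, linv x] @ v) (u @ v)"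
| rel:  "rstep (u @ relator @ v) (u @ v)"

definition geq :: "word \<Rightarrow> word \<Rightarrow> bool" where
  "geq = (sup rstep rstep\<inverse>\<inverse>)\<^sup>*\<^sup>*"

definition wlen :: "word \<Rightarrow> nat" where
  "wlen w = (LEAST n. \<exists>v. geq w v \<and> length v = n)"

definition geodesic :: "word \<Rightarrow> bool" where
  "geodesic w \<longleftrightarrow> wlen w = length w"

text \<open>Cone type of the element represented by x, as the set of words representing
  elements of the cone (membership depends only on the represented element).\<close>
definition cone :: "word \<Rightarrow> word set" where
  "cone x = {z. wlen (x @ z) = wlen x + wlen z}"

definition inR :: "word \<Rightarrow> bool" where
  "inR w \<longleftrightarrow> w \<noteq> [] \<and> length w \<le> 4 \<and>
     (\<exists>r \<in> {relator, relator_inv}. \<exists>k p s. rotate k r = p @ w @ s)"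

end

theory Submission
  imports Defs "HOL-Analysis.Product_Vector"
begin

text \<open>
  The regular hyperbolic octagon with angles \<open>\<pi>/4\<close> is a fundamental domain of \<open>\<Gamma>\<^sub>2\<close>, so a word in
  \<open>\<Gamma>\<^sub>2\<close> is a gallery of octagons, and the sequence of walls it crosses is a word in the reflection
  group \<open>W\<close> of the octagon; word length in \<open>\<Gamma>\<^sub>2\<close> is Coxeter length in \<open>W\<close>. A piece
  \<open>u\<^sub>1u\<^sub>2u\<^sub>3u\<^sub>4\<close> of the relator crosses two adjacent sides alternately, so after a symmetry of the
  octagon it becomes \<open>w0 = A0 A1 A0 A1\<close>, the longest element of a vertex stabiliser. Hence (1)
  reduces to a statement in \<open>W\<close>: if \<open>Y w0\<close> and \<open>w0 Z\<close> are reduced then so is \<open>Y w0 Z\<close>. This is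
  proved in the geometric representation of \<open>W\<close> on Minkowski space. A descent at the end of
  \<open>Y w0 Z\<close> would give a root whose wall misses the star of the vertex of \<open>w0\<close> (roots are positive
  or negative according to ascents) and yet separates the vertex from points of two opposite sectors
  at it, which an explicit estimate rules out. Part (2) follows formally from (1).
\<close>

section \<open>Equivalence closures of rewriting systems on words\<close>

lemma equivclp_context:
  assumes closed: "\<And>a b u v. R a b \<Longrightarrow> R (u @ a @ v) (u @ b @ v)" and "equivclp R a b"
  shows "equivclp R (u @ a @ v) (u @ b @ v)"
  using assms(2)
proof (induction rule: equivclp_induct)
  case (step y z)
  then show ?case by (blast intro: equivclp_into_equivclp closed)
qed simp

lemma equivclp_append:
  assumes closed: "\<And>a b u v. R a b \<Longrightarrow> R (u @ a @ v) (u @ b @ v)"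
    and "equivclp R a b" "equivclp R c d"
  shows "equivclp R (a @ c) (b @ d)"
  using equivclp_context[OF closed assms(2), of "[]" c] equivclp_context[OF closed assms(3), of b "[]"]
  by (auto intro: equivclp_trans)

lemma equivclp_transfer:
  assumes "\<And>a b. R a b \<Longrightarrow> equivclp S (f a) (f b)" and "equivclp R a b"
  shows "equivclp S (f a) (f b)"
  using assms(2)
proof (induction rule: equivclp_induct)
  case (step y z)
  then show ?case by (meson assms(1) equivclp_sym equivclp_trans)
qed simp

lemma equivclp_invariant:
  assumes "\<And>a b. R a b \<Longrightarrow> f a = f b" and "equivclp R a b"
  shows "f a = f b"
  using assms(2) by (induction rule: equivclp_induct) (auto dest: assms(1))

definition min_len :: "('a list \<Rightarrow> 'a list \<Rightarrow> bool) \<Rightarrow> 'a list \<Rightarrow> nat" where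
  "min_len R w = (LEAST n. \<exists>v. equivclp R w v \<and> length v = n)"

lemma min_len_le: "equivclp R w v \<Longrightarrow> min_len R w \<le> length v"
  unfolding min_len_def by (rule Least_le) auto

lemma min_len_le_length: "min_len R w \<le> length w"
  by (rule min_len_le) simp

lemma min_len_obtain:
  obtains v where "equivclp R w v" "length v = min_len R w"
proof -
  have "\<exists>v. equivclp R w v \<and> length v = min_len R w"
    unfolding min_len_def by (rule LeastI_ex) (auto intro: exI[of _ w])
  then show thesis using that by blast
qed

lemma min_len_cong: assumes "equivclp R w w'" shows "min_len R w = min_len R w'"
proof -
  have le: "min_len R w \<le> min_len R w'" if "equivclp R w w'" for w w'
    by (metis that min_len_obtain min_len_le equivclp_trans)
  show ?thesis using le[OF assms] le[OF equivclp_sym[OF assms]] by simp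
qed

lemma min_len_append:
  assumes "\<And>a b u v. R a b \<Longrightarrow> R (u @ a @ v) (u @ b @ v)"
  shows "min_len R (a @ b) \<le> min_len R a + min_len R b"
proof -
  obtain v v' where v: "equivclp R a v" "length v = min_len R a"
    and v': "equivclp R b v'" "length v' = min_len R b"
    by (metis min_len_obtain)
  have "equivclp R (a @ b) (v @ v')" by (rule equivclp_append[of R, OF assms v(1) v'(1)])
  then show ?thesis using min_len_le v(2) v'(2) by fastforce
qed

lemma min_len_eq_0: "min_len R w = 0 \<Longrightarrow> equivclp R w []"
  by (metis min_len_obtain length_0_conv)

section \<open>The reflection group of the regular octagon with angles \<open>\<pi>/4\<close>\<close>

datatype side = A0 | A1 | A2 | A3 | A4 | A5 | A6 | A7

fun side_idx :: "side \<Rightarrow> int" where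
  "side_idx A0 = 0" | "side_idx A1 = 1" | "side_idx A2 = 2" | "side_idx A3 = 3"
| "side_idx A4 = 4" | "side_idx A5 = 5" | "side_idx A6 = 6" | "side_idx A7 = 7"

definition side_of_int :: "int \<Rightarrow> side" where
  "side_of_int n = (let m = n mod 8 in if m = 0 then A0 else if m = 1 then A1 else if m = 2 then A2
     else if m = 3 then A3 else if m = 4 then A4 else if m = 5 then A5 else if m = 6 then A6 else A7)"

lemma side_of_int_side_idx [simp]: "side_of_int (side_idx a) = a"
  by (cases a) (auto simp: side_of_int_def)

lemma side_idx_side_of_int [simp]: "side_idx (side_of_int n) = n mod 8"
proof -
  have "n mod 8 \<in> {0,1,2,3,4,5,6,7}" by auto
  then show ?thesis by (auto simp: side_of_int_def Let_def)
qed

lemma side_of_int_cong: "x mod 8 = y mod 8 \<Longrightarrow> side_of_int x = side_of_int y"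
  unfolding side_of_int_def by simp

definition adjacent :: "side \<Rightarrow> side \<Rightarrow> bool" where
  "adjacent a b \<longleftrightarrow> (side_idx b - side_idx a) mod 8 = 1 \<or> (side_idx b - side_idx a) mod 8 = 7"

lemma adjacent_sym: "adjacent a b \<Longrightarrow> adjacent b a"
  unfolding adjacent_def by presburger

lemma adjacent_irrefl: "\<not> adjacent a a"
  unfolding adjacent_def by simp

definition oct :: "side \<Rightarrow> side \<Rightarrow> side list" where
  "oct a b = [a,b,a,b,a,b,a,b]"

inductive cox_step :: "side list \<Rightarrow> side list \<Rightarrow> bool" where
  cancel: "cox_step (u @ [a,a] @ v) (u @ v)"
| braid: "adjacent a b \<Longrightarrow> cox_step (u @ oct a b @ v) (u @ v)"

lemma cox_step_context: "cox_step a b \<Longrightarrow> cox_step (u @ a @ v) (u @ b @ v)"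
proof (induction rule: cox_step.induct)
  case (cancel u' a v')
  show ?case using cox_step.cancel[of "u @ u'" a "v' @ v"] by simp
next
  case (braid a b u' v')
  show ?case using cox_step.braid[OF braid(1), of "u @ u'" "v' @ v"] by simp
qed

abbreviation cox_eq :: "side list \<Rightarrow> side list \<Rightarrow> bool" where
  "cox_eq \<equiv> equivclp cox_step"

abbreviation cox_len :: "side list \<Rightarrow> nat" where
  "cox_len \<equiv> min_len cox_step"

lemma cox_eq_append: "cox_eq a b \<Longrightarrow> cox_eq c d \<Longrightarrow> cox_eq (a @ c) (b @ d)"
  by (rule equivclp_append[of cox_step, OF cox_step_context])

lemma cox_eq_context: "cox_eq a b \<Longrightarrow> cox_eq (u @ a @ v) (u @ b @ v)"
  by (rule equivclp_context[of cox_step, OF cox_step_context])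

lemma cox_len_append: "cox_len (a @ b) \<le> cox_len a + cox_len b"
  by (rule min_len_append[of cox_step, OF cox_step_context])

lemma cox_eq_square: "cox_eq (u @ [a,a] @ v) (u @ v)"
  by (rule r_into_equivclp, rule cox_step.cancel)

lemma cox_eq_snoc_snoc: "cox_eq (w @ [a, a]) w"
  using cox_eq_square[of w a "[]"] by simp

lemma cox_eq_oct: "adjacent a b \<Longrightarrow> cox_eq (oct a b) []"
  using cox_step.braid[of a b "[]" "[]"] by auto

lemma cox_eq_append_rev: "cox_eq (w @ rev w) []"
proof (induction w)
  case (Cons a w)
  have "cox_eq ([a] @ (w @ rev w) @ [a]) ([a] @ [] @ [a])" by (rule cox_eq_context[OF Cons])
  then show ?case using cox_eq_square[of "[]" a "[]"] by (auto intro: equivclp_trans)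
qed simp

lemma cox_eq_inverse: "cox_eq (w @ v) [] \<Longrightarrow> cox_eq w (rev v)"
proof -
  assume h: "cox_eq (w @ v) []"
  have "cox_eq ((w @ v) @ rev v) ([] @ rev v)" by (rule cox_eq_append[OF h]) simp
  moreover have "cox_eq (w @ (v @ rev v)) (w @ [])" by (rule cox_eq_append) (auto simp: cox_eq_append_rev)
  ultimately show ?thesis by (metis append_Nil append_Nil2 append_assoc equivclp_sym equivclp_trans)
qed

lemma cox_step_rev: "cox_step a b \<Longrightarrow> cox_step (rev a) (rev b)"
proof (induction rule: cox_step.induct)
  case (cancel u a v)
  show ?case using cox_step.cancel[of "rev v" a "rev u"] by simp
next
  case (braid a b u v)
  have "rev (oct a b) = oct b a" by (simp add: oct_def)
  then show ?case using cox_step.braid[OF adjacent_sym[OF braid(1)], of "rev v" "rev u"] by simp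
qed

lemma cox_len_rev: "cox_len (rev w) = cox_len w"
proof -
  have le: "cox_len (rev w) \<le> cox_len w" for w
  proof -
    obtain v where v: "cox_eq w v" "length v = cox_len w" by (rule min_len_obtain)
    have "cox_eq (rev w) (rev v)" by (rule equivclp_transfer[OF _ v(1)]) (auto intro: cox_step_rev)
    then show ?thesis using min_len_le v(2) by fastforce
  qed
  show ?thesis using le[of w] le[of "rev w"] by simp
qed

lemma cox_eq_parity: "cox_eq a b \<Longrightarrow> even (length a) = even (length b)"
  by (rule equivclp_invariant[where f = "\<lambda>w. even (length w)"])
    (auto elim: cox_step.cases simp: oct_def)

lemma cox_len_parity: "even (cox_len w) = even (length w)"
  by (metis min_len_obtain cox_eq_parity)

lemma cox_len_snoc: "cox_len (w @ [s]) = cox_len w + 1 \<or> cox_len w = cox_len (w @ [s]) + 1"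
proof -
  have "cox_len (w @ [s]) \<le> cox_len w + 1"
    using cox_len_append[of w "[s]"] min_len_le_length[of cox_step "[s]"] by simp
  moreover have "cox_len w \<le> cox_len (w @ [s]) + 1"
  proof -
    have "cox_len w = cox_len ((w @ [s]) @ [s])"
      using min_len_cong[OF cox_eq_snoc_snoc[of w s]] by simp
    also have "\<dots> \<le> cox_len (w @ [s]) + 1"
      using cox_len_append[of "w @ [s]" "[s]"] min_len_le_length[of cox_step "[s]"] by simp
    finally show ?thesis .
  qed
  moreover have "cox_len (w @ [s]) \<noteq> cox_len w"
    using cox_len_parity[of w] cox_len_parity[of "w @ [s]"] by auto
  ultimately show ?thesis by linarith
qed

lemma cox_len_cons: "cox_len (s # w) = cox_len w + 1 \<or> cox_len w = cox_len (s # w) + 1"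
  using cox_len_snoc[of "rev w" s] cox_len_rev by (metis rev.simps(2) rev_rev_ident)

section \<open>Symmetries of the octagon\<close>

text \<open>\<open>(True, c)\<close> is the rotation \<open>a \<mapsto> c + a\<close> and \<open>(False, c)\<close> the reflection \<open>a \<mapsto> c - a\<close>
  of the side indices modulo 8.\<close>

type_synonym dihedral = "bool \<times> side"

fun dih_app :: "dihedral \<Rightarrow> side \<Rightarrow> side" where
  "dih_app (b, c) a = side_of_int (if b then side_idx c + side_idx a else side_idx c - side_idx a)"

fun dih_comp :: "dihedral \<Rightarrow> dihedral \<Rightarrow> dihedral" where
  "dih_comp (b, c) (b', c') =
     (b = b', side_of_int (if b then side_idx c + side_idx c' else side_idx c - side_idx c'))"

fun dih_inv :: "dihedral \<Rightarrow> dihedral" where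
  "dih_inv (b, c) = (b, if b then side_of_int (- side_idx c) else c)"

definition dih_id :: dihedral where
  "dih_id = (True, A0)"

lemma dih_app_comp: "dih_app (dih_comp f g) a = dih_app f (dih_app g a)"
  by (cases f; cases g) (auto intro!: side_of_int_cong simp: mod_simps algebra_simps)

lemma dih_app_inv_left [simp]: "dih_app (dih_inv f) (dih_app f a) = a"
  by (cases f) (auto intro!: trans[OF side_of_int_cong side_of_int_side_idx] simp: mod_simps)

lemma dih_app_inv_right [simp]: "dih_app f (dih_app (dih_inv f) a) = a"
  by (cases f) (auto intro!: trans[OF side_of_int_cong side_of_int_side_idx] simp: mod_simps)

lemma dih_app_id [simp]: "dih_app dih_id a = a"
  unfolding dih_id_def by simp

lemma dih_ext: assumes "\<And>a. dih_app f a = dih_app g a" shows "f = g"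
proof -
  obtain b c b' c' where f: "f = (b, c)" and g: "g = (b', c')" by (cases f; cases g)
  have "dih_app (x, y) A0 = y" for x y by (cases x) simp_all
  then have "c = c'" using assms[of A0] f g by metis
  moreover have "b = b'"
  proof (rule ccontr)
    assume "b \<noteq> b'"
    then have "side_of_int (side_idx c + 1) = side_of_int (side_idx c - 1)"
      using assms[of A1] f g \<open>c = c'\<close> by (cases b) auto
    then have "(side_idx c + 1) mod 8 = (side_idx c - 1) mod 8" by (metis side_idx_side_of_int)
    then show False by presburger
  qed
  ultimately show ?thesis using f g by simp
qed

lemma dih_comp_assoc: "dih_comp (dih_comp f g) h = dih_comp f (dih_comp g h)"
  by (rule dih_ext) (simp add: dih_app_comp)

lemma dih_comp_id [simp]: "dih_comp dih_id f = f" "dih_comp f dih_id = f"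
  by (rule dih_ext, simp add: dih_app_comp)+

lemma dih_comp_inv_left [simp]: "dih_comp (dih_inv f) f = dih_id"
  by (rule dih_ext) (simp add: dih_app_comp)

lemma dih_app_adjacent [simp]: "adjacent (dih_app f a) (dih_app f b) = adjacent a b"
proof (cases f)
  case (Pair rot c)
  have "(side_idx (dih_app f b) - side_idx (dih_app f a)) mod 8
      = (if rot then side_idx b - side_idx a else side_idx a - side_idx b) mod 8"
    using Pair by (simp add: mod_simps)
  moreover have "((side_idx a - side_idx b) mod 8 = 1 \<or> (side_idx a - side_idx b) mod 8 = 7) \<longleftrightarrow>
      ((side_idx b - side_idx a) mod 8 = 1 \<or> (side_idx b - side_idx a) mod 8 = 7)" by presburger
  ultimately show ?thesis unfolding adjacent_def by auto
qed

lemma dih_normalize_adjacent: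
  assumes "adjacent a b" obtains h where "dih_app h a = A0" "dih_app h b = A1"
proof -
  let ?h = "if (side_idx b - side_idx a) mod 8 = 1 then (True, side_of_int (- side_idx a)) else (False, a)"
  have "dih_app ?h a = A0 \<and> dih_app ?h b = A1"
    using assms by (cases a; cases b) (simp_all add: adjacent_def side_of_int_def)
  then show thesis using that by blast
qed

lemma map_oct: "map g (oct a b) = oct (g a) (g b)"
  by (simp add: oct_def)

section \<open>The geometric representation\<close>

text \<open>The unit vectors \<open>sroot a\<close> are the
  normals of a regular octagon with angles \<open>\<pi>/4\<close> on the hyperboloid, and \<open>vertex k\<close> is its
  vertex between the sides \<open>k\<close> and \<open>k + 1\<close>.\<close>

type_synonym vec = "real \<times> real \<times> real"

definition sqrt2 :: real where
  "sqrt2 = sqrt 2"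

lemma sqrt2_square [simp]: "sqrt2 * sqrt2 = 2" "sqrt2 * (sqrt2 * x) = 2 * x"
  unfolding sqrt2_def by (simp_all add: mult.assoc[symmetric])

lemma sqrt2_bounds: "1.4142135 < sqrt2" "sqrt2 < 1.4142136"
  unfolding sqrt2_def
  by (rule real_less_rsqrt, simp add: power2_eq_square) (rule real_less_lsqrt, simp_all add: power2_eq_square)

definition mu :: real where
  "mu = 2 * sqrt2 - 2"

lemma mu_pos: "0 < mu"
  using sqrt2_bounds by (simp add: mu_def)

fun B :: "vec \<Rightarrow> vec \<Rightarrow> real" where
  "B (a1, a2, a3) (b1, b2, b3) = a1 * b1 + a2 * b2 - mu * a3 * b3"

lemma B_zero [simp]: "B 0 y = 0" "B y 0 = 0"
  by (cases y; simp add: zero_prod_def)+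

lemma B_sym: "B x y = B y x"
  by (cases x; cases y) (auto simp: algebra_simps)

lemma B_add_left: "B (x + y) z = B x z + B y z"
  and B_add_right: "B z (x + y) = B z x + B z y"
  and B_scaleR_left: "B (c *\<^sub>R x) z = c * B x z"
  and B_scaleR_right: "B z (c *\<^sub>R x) = c * B z x"
  and B_minus_left: "B (- x) z = - B x z"
  and B_minus_right: "B z (- x) = - B z x"
  and B_diff_left: "B (x - y) z = B x z - B y z"
  and B_diff_right: "B z (x - y) = B z x - B z y"
  by (cases x; cases y; cases z; simp add: algebra_simps)+

lemmas B_linear = B_add_left B_add_right B_scaleR_left B_scaleR_right B_minus_left B_minus_right
  B_diff_left B_diff_right

fun sroot :: "side \<Rightarrow> vec" where
  "sroot A0 = (1 + sqrt2, 0, -1 - sqrt2)"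
| "sroot A1 = (1 + sqrt2/2, 1 + sqrt2/2, -1 - sqrt2)"
| "sroot A2 = (0, 1 + sqrt2, -1 - sqrt2)"
| "sroot A3 = (-1 - sqrt2/2, 1 + sqrt2/2, -1 - sqrt2)"
| "sroot A4 = (-1 - sqrt2, 0, -1 - sqrt2)"
| "sroot A5 = (-1 - sqrt2/2, -1 - sqrt2/2, -1 - sqrt2)"
| "sroot A6 = (0, -1 - sqrt2, -1 - sqrt2)"
| "sroot A7 = (1 + sqrt2/2, -1 - sqrt2/2, -1 - sqrt2)"

fun vertex :: "side \<Rightarrow> vec" where
  "vertex A0 = (2 - 2*sqrt2, 4*sqrt2 - 6, 1)"
| "vertex A1 = (4*sqrt2 - 6, 2 - 2*sqrt2, 1)"
| "vertex A2 = (6 - 4*sqrt2, 2 - 2*sqrt2, 1)"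
| "vertex A3 = (2*sqrt2 - 2, 4*sqrt2 - 6, 1)"
| "vertex A4 = (2*sqrt2 - 2, 6 - 4*sqrt2, 1)"
| "vertex A5 = (6 - 4*sqrt2, 2*sqrt2 - 2, 1)"
| "vertex A6 = (4*sqrt2 - 6, 2*sqrt2 - 2, 1)"
| "vertex A7 = (2 - 2*sqrt2, 6 - 4*sqrt2, 1)"

lemma B_sroot_sroot [simp]: "B (sroot a) (sroot a) = 1"
  by (cases a) (auto simp: mu_def algebra_simps)

lemma B_sroot_adjacent: "adjacent a b \<Longrightarrow> B (sroot a) (sroot b) = - sqrt2 / 2"
  by (cases a; cases b) (auto simp: adjacent_def mu_def field_simps)

lemma B_sroot_nonadjacent: "s \<noteq> t \<Longrightarrow> \<not> adjacent s t \<Longrightarrow> B (sroot s) (sroot t) \<le> -1"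
  using sqrt2_bounds by (cases s; cases t) (auto simp: adjacent_def mu_def field_simps)

lemma B_sroot_vertex_nonneg: "0 \<le> B (sroot a) (vertex k)"
  using sqrt2_bounds by (cases a; cases k) (auto simp: mu_def algebra_simps)

definition reflect :: "side \<Rightarrow> vec \<Rightarrow> vec" where
  "reflect a v = v - (2 * B (sroot a) v) *\<^sub>R sroot a"

lemma reflect_add: "reflect a (x + y) = reflect a x + reflect a y"
  and reflect_scaleR: "reflect a (c *\<^sub>R x) = c *\<^sub>R reflect a x"
  unfolding reflect_def by (simp_all add: B_linear algebra_simps)

lemma reflect_sroot [simp]: "reflect a (sroot a) = - sroot a"
  unfolding reflect_def by (simp add: scaleR_2)

lemma reflect_reflect [simp]: "reflect a (reflect a v) = v"
  unfolding reflect_def by (simp add: B_linear algebra_simps scaleR_2 flip: scaleR_scaleR)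

lemma B_reflect: "B (reflect a x) (reflect a y) = B x y"
  unfolding reflect_def by (simp add: B_linear B_sym[of "sroot a"] algebra_simps)

primrec act :: "side list \<Rightarrow> vec \<Rightarrow> vec" where
  "act [] v = v"
| "act (a # w) v = reflect a (act w v)"

lemma act_append: "act (u @ w) v = act u (act w v)"
  by (induction u) auto

lemma B_act: "B (act w x) (act w y) = B x y"
  by (induction w) (auto simp: B_reflect)

lemma act_add: "act w (x + y) = act w x + act w y"
  by (induction w) (auto simp: reflect_add)

lemma act_scaleR: "act w (c *\<^sub>R x) = c *\<^sub>R act w x"
  by (induction w) (auto simp: reflect_scaleR)

lemma act_uminus: "act w (- x) = - act w x"
  using act_scaleR[of w "-1" x] by simp

lemma act_rev [simp]: "act (rev w) (act w v) = v" "act w (act (rev w) v) = v"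
  by (induction w arbitrary: v) (auto simp: act_append)

lemma reflect_first:
  "reflect s (v + A *\<^sub>R sroot s + C *\<^sub>R sroot t)
     = v + (- A - 2 * B (sroot s) v - 2 * C * B (sroot s) (sroot t)) *\<^sub>R sroot s + C *\<^sub>R sroot t"
  unfolding reflect_def by (simp add: B_linear algebra_simps scaleR_2 flip: scaleR_scaleR)

lemma reflect_second:
  "reflect t (v + A *\<^sub>R sroot s + C *\<^sub>R sroot t)
     = v + A *\<^sub>R sroot s + (- C - 2 * B (sroot t) v - 2 * A * B (sroot s) (sroot t)) *\<^sub>R sroot t"
  unfolding reflect_def
  by (simp add: B_linear B_sym[of "sroot t" "sroot s"] algebra_simps scaleR_2 flip: scaleR_scaleR)

lemma act_oct: assumes "adjacent s t" shows "act (oct s t) v = v"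
proof -
  \<comment> \<open>Only the coefficients of \<open>sroot s\<close> and \<open>sroot t\<close> move, and they return to \<open>0\<close>.\<close>
  have "act (oct s t) (v + 0 *\<^sub>R sroot s + 0 *\<^sub>R sroot t) = v + 0 *\<^sub>R sroot s + 0 *\<^sub>R sroot t"
    unfolding oct_def
    by (simp only: act.simps reflect_first reflect_second B_sroot_adjacent[OF assms])
      (simp add: algebra_simps)
  then show ?thesis by simp
qed

lemma cox_eq_act: "cox_eq a b \<Longrightarrow> act a = act b"
  by (rule equivclp_invariant[where f = act])
    (auto elim!: cox_step.cases simp: act_append act_oct fun_eq_iff)

subsection \<open>Positive roots\<close>

definition positive :: "vec \<Rightarrow> bool" where
  "positive x \<longleftrightarrow> x \<noteq> 0 \<and> (\<forall>k. 0 \<le> B x (vertex k))"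

definition center :: vec where
  "center = (0, 0, 1)"

lemma eq_0_if_orthogonal_vertices: assumes "\<And>k. B x (vertex k) = 0" shows "x = 0"
proof -
  obtain b1 b2 b3 where x: "x = (b1, b2, b3)" by (cases x) auto
  have e0: "b1*(2-2*sqrt2) + b2*(4*sqrt2-6) - mu*b3 = 0" using assms[of A0] by (simp add: x)
  have e2: "b1*(6-4*sqrt2) + b2*(2-2*sqrt2) - mu*b3 = 0" using assms[of A2] by (simp add: x)
  have e4: "b1*(2*sqrt2-2) + b2*(6-4*sqrt2) - mu*b3 = 0" using assms[of A4] by (simp add: x)
  have "mu * b3 = 0" using e0 e4 by (simp add: algebra_simps)
  then have b3: "b3 = 0" using mu_pos by simp
  have "(2-2*sqrt2) * (b1*(2-2*sqrt2) + b2*(4*sqrt2-6)) - (4*sqrt2-6) * (b1*(6-4*sqrt2) + b2*(2-2*sqrt2))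
      = b1 * (80 - 56*sqrt2)"
    by (simp add: algebra_simps)
  then have "b1 * (80 - 56*sqrt2) = 0" using e0 e2 b3 by simp
  then have b1: "b1 = 0" using sqrt2_bounds by simp
  then have "b2 * (4*sqrt2 - 6) = 0" using e0 b3 by simp
  then have "b2 = 0" using sqrt2_bounds by simp
  then show ?thesis using x b1 b3 by (simp add: zero_prod_def)
qed

text \<open>The vertices of the octagon average to its center.\<close>

lemma positive_B_center: assumes "positive x" shows "0 < B x center"
proof -
  have sum: "8 * B x center = B x (vertex A0) + B x (vertex A1) + B x (vertex A2) + B x (vertex A3)
     + B x (vertex A4) + B x (vertex A5) + B x (vertex A6) + B x (vertex A7)"
    by (cases x) (simp add: center_def algebra_simps)
  have nonneg: "0 \<le> B x (vertex k)" for k using assms unfolding positive_def by auto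
  obtain k where "B x (vertex k) \<noteq> 0"
    using eq_0_if_orthogonal_vertices assms unfolding positive_def by blast
  then have "0 < B x (vertex k)" using nonneg[of k] by linarith
  then show ?thesis
    using sum nonneg[of A0] nonneg[of A1] nonneg[of A2] nonneg[of A3] nonneg[of A4]
      nonneg[of A5] nonneg[of A6] nonneg[of A7]
    by (cases k) (simp_all del: vertex.simps)
qed

lemma positive_combination:
  assumes "positive x" "positive y" "0 \<le> a" "0 \<le> b" "0 < a + b"
  shows "positive (a *\<^sub>R x + b *\<^sub>R y)"
proof -
  have "0 < a * B x center + b * B y center"
    using assms positive_B_center[OF assms(1)] positive_B_center[OF assms(2)]
    by (smt (verit) mult_nonneg_nonneg mult_pos_pos)
  then have "B (a *\<^sub>R x + b *\<^sub>R y) center \<noteq> 0" by (simp add: B_linear)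
  then have "a *\<^sub>R x + b *\<^sub>R y \<noteq> 0" by auto
  then show ?thesis using assms unfolding positive_def by (simp add: B_linear)
qed

lemma not_positive_uminus: "positive x \<Longrightarrow> \<not> positive (- x)"
proof
  assume "positive x" "positive (- x)"
  then show False using positive_B_center[of x] positive_B_center[of "- x"] by (simp add: B_linear)
qed

lemma positive_sroot: "positive (sroot a)"
proof -
  have "sroot a \<noteq> 0" using sqrt2_bounds by (cases a) (auto simp: zero_prod_def)
  then show ?thesis unfolding positive_def using B_sroot_vertex_nonneg by blast
qed

definition root_comb :: "real \<Rightarrow> real \<Rightarrow> side \<Rightarrow> side \<Rightarrow> vec" where
  "root_comb A C s t = A *\<^sub>R sroot s + C *\<^sub>R sroot t"

lemma reflect_root_comb:
  "reflect s (root_comb A C s t) = root_comb (- A - 2 * C * B (sroot s) (sroot t)) C s t"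
  "reflect t (root_comb A C s t) = root_comb A (- C - 2 * A * B (sroot s) (sroot t)) s t"
  using reflect_first[of s 0 A C t] reflect_second[of t 0 A s C] unfolding root_comb_def by simp_all

lemma sroot_eq_root_comb: "sroot s = root_comb 1 0 s t"
  unfolding root_comb_def by simp

text \<open>For non-adjacent \<open>s, t\<close> the subgroup \<open>\<langle>s, t\<rangle>\<close> is infinite and the coefficients of
  \<open>x (sroot s)\<close> grow along every reduced word \<open>x\<close>; the invariant records which one is larger.\<close>

lemma act_sroot_nonadjacent:
  assumes "s \<noteq> t" "\<not> adjacent s t"
  shows "set x \<subseteq> {s,t} \<Longrightarrow> successively (\<noteq>) x \<Longrightarrow> (x = [] \<or> last x = t) \<Longrightarrow>
    \<exists>A C. act x (sroot s) = root_comb A C s t \<and> 0 \<le> A \<and> 0 \<le> C \<and>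
      (x \<noteq> [] \<and> hd x = t \<longrightarrow> A \<le> C) \<and> ((x = [] \<or> hd x = s) \<longrightarrow> C \<le> A)"
proof (induction x)
  case Nil
  show ?case by (rule exI[of _ 1], rule exI[of _ 0]) (simp add: sroot_eq_root_comb[of s t])
next
  case (Cons h x)
  define c where "c = B (sroot s) (sroot t)"
  have c: "c \<le> -1" using B_sroot_nonadjacent[OF assms] c_def by simp
  show ?case
  proof (cases x)
    case Nil
    then have "h = t" using Cons.prems by simp
    then have "act (h # x) (sroot s) = root_comb 1 (-2 * c) s t"
      using Nil by (simp add: sroot_eq_root_comb[of s t] reflect_root_comb c_def)
    then show ?thesis using c Nil \<open>h = t\<close> assms(1) by (intro exI[of _ 1] exI[of _ "-2 * c"]) auto
  next
    case (Cons h' x')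
    then obtain A C where AC: "act x (sroot s) = root_comb A C s t" "0 \<le> A" "0 \<le> C"
      "hd x = t \<longrightarrow> A \<le> C" "hd x = s \<longrightarrow> C \<le> A"
      using Cons.IH Cons.prems by (auto simp: successively_Cons)
    have "h \<noteq> hd x" "hd x \<in> {s,t}" "h \<in> {s,t}" using Cons.prems \<open>x = h' # x'\<close> by auto
    then consider "h = t" "hd x = s" | "h = s" "hd x = t" by auto
    then show ?thesis
    proof cases
      case 1
      have "A * c \<le> A * -1" by (rule mult_left_mono[OF c AC(2)])
      then show ?thesis using AC 1 assms(1)
        by (intro exI[of _ A] exI[of _ "- C - 2 * A * c"]) (simp add: reflect_root_comb c_def)
    next
      case 2
      have "C * c \<le> C * -1" by (rule mult_left_mono[OF c AC(3)])
      then show ?thesis using AC 2 assms(1)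
        by (intro exI[of _ "- A - 2 * C * c"] exI[of _ C]) (simp add: reflect_root_comb c_def)
    qed
  qed
qed

lemma act_sroot_adjacent:
  assumes "adjacent s t" "set x \<subseteq> {s,t}" "successively (\<noteq>) x" "x = [] \<or> last x = t" "length x \<le> 3"
  shows "\<exists>A C. act x (sroot s) = root_comb A C s t \<and> 0 \<le> A \<and> 0 \<le> C"
proof -
  have "s \<noteq> t" using assms(1) adjacent_irrefl by metis
  have "0 \<le> sqrt2" using sqrt2_bounds by simp
  have "x = [] \<or> (\<exists>a. x = [a]) \<or> (\<exists>a b. x = [a,b]) \<or> (\<exists>a b c. x = [a,b,c])"
    using assms(5) by (auto simp: le_Suc_eq length_Suc_conv numeral_3_eq_3)
  then have "x = [] \<or> x = [t] \<or> x = [s,t] \<or> x = [t,s,t]"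
    using assms(2-4) \<open>s \<noteq> t\<close> by auto
  then consider "x = []" | "x = [t]" | "x = [s,t]" | "x = [t,s,t]" by blast
  then show ?thesis
  proof cases
    case 1
    then show ?thesis by (intro exI[of _ 1] exI[of _ 0]) (simp add: sroot_eq_root_comb[of s t])
  next
    case 2
    then show ?thesis using \<open>0 \<le> sqrt2\<close> B_sroot_adjacent[OF assms(1)]
      by (intro exI[of _ 1] exI[of _ sqrt2]) (simp add: sroot_eq_root_comb[of s t] reflect_root_comb)
  next
    case 3
    then show ?thesis using \<open>0 \<le> sqrt2\<close> B_sroot_adjacent[OF assms(1)]
      by (intro exI[of _ 1] exI[of _ sqrt2])
        (simp add: sroot_eq_root_comb[of s t] reflect_root_comb algebra_simps)
  next
    case 4
    then show ?thesis using B_sroot_adjacent[OF assms(1)]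
      by (intro exI[of _ 1] exI[of _ 0])
        (simp add: sroot_eq_root_comb[of s t] reflect_root_comb algebra_simps)
  qed
qed

definition parabolic_len :: "side \<Rightarrow> side \<Rightarrow> side list \<Rightarrow> nat" where
  "parabolic_len s t x = (LEAST n. \<exists>x'. set x' \<subseteq> {s,t} \<and> cox_eq x x' \<and> length x' = n)"

lemma parabolic_len_le: "set x' \<subseteq> {s,t} \<Longrightarrow> cox_eq x x' \<Longrightarrow> parabolic_len s t x \<le> length x'"
  unfolding parabolic_len_def by (rule Least_le) blast

lemma parabolic_len_obtain:
  assumes "set x \<subseteq> {s,t}"
  obtains x' where "set x' \<subseteq> {s,t}" "cox_eq x x'" "length x' = parabolic_len s t x"
proof -
  have "\<exists>x'. set x' \<subseteq> {s,t} \<and> cox_eq x x' \<and> length x' = parabolic_len s t x"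
    unfolding parabolic_len_def by (rule LeastI_ex) (use assms in auto)
  then show thesis using that by blast
qed

lemma cox_len_le_parabolic_len: "set x \<subseteq> {s,t} \<Longrightarrow> cox_len x \<le> parabolic_len s t x"
  by (metis parabolic_len_obtain min_len_le)

lemma parabolic_len_Cons: "set x \<subseteq> {s,t} \<Longrightarrow> a \<in> {s,t} \<Longrightarrow> parabolic_len s t (a # x) \<le> parabolic_len s t x + 1"
proof -
  assume x: "set x \<subseteq> {s,t}" and a: "a \<in> {s,t}"
  obtain x' where x': "set x' \<subseteq> {s,t}" "cox_eq x x'" "length x' = parabolic_len s t x"
    using parabolic_len_obtain[OF x] .
  have "cox_eq ([a] @ x) ([a] @ x')" by (rule cox_eq_append[OF _ x'(2)]) simp
  then show ?thesis using parabolic_len_le[of "a # x'" s t "a # x"] x' a by simp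
qed

lemma parabolic_len_single: "parabolic_len s t [t] = 1"
proof -
  have "parabolic_len s t [t] \<le> 1" using parabolic_len_le[of "[t]" s t "[t]"] by simp
  moreover obtain x' where "cox_eq [t] x'" "length x' = parabolic_len s t [t]"
    using parabolic_len_obtain[of "[t]" s t] by auto
  then have "odd (parabolic_len s t [t])" using cox_eq_parity[of "[t]" x'] by simp
  then have "parabolic_len s t [t] \<noteq> 0" by (metis odd_pos neq0_conv)
  ultimately show ?thesis by simp
qed

lemma not_successively_neq: "\<not> successively (\<noteq>) x \<Longrightarrow> \<exists>u a v. x = u @ [a,a] @ v"
proof (induction x)
  case (Cons b x)
  then obtain c x' where x: "x = c # x'" by (cases x) auto
  show ?case
  proof (cases "b = c")
    case True
    then show ?thesis using x by (intro exI[of _ "[]"] exI[of _ b] exI[of _ x']) simp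
  next
    case False
    then obtain u a v where "x = u @ [a,a] @ v" using Cons x by (auto simp: successively_Cons)
    then show ?thesis by (intro exI[of _ "b # u"] exI[of _ a] exI[of _ v]) simp
  qed
qed simp

lemma reduced_suffix_braid_half:
  assumes "s \<noteq> t" "set x \<subseteq> {s,t}" "successively (\<noteq>) x" "last x = t" "\<not> length x \<le> 3"
  obtains y where "x @ [s] = y @ [s,t,s,t,s]"
proof -
  define z where "z = drop (length x - 4) x"
  have "length z = 4" using assms(5) unfolding z_def by simp
  then obtain a b c d where "z = [a,b,c,d]" by (auto simp: length_Suc_conv numeral_eq_Suc)
  then obtain y where yz: "x = y @ [a,b,c,d]" unfolding z_def by (metis append_take_drop_id)
  have "successively (\<noteq>) [a,b,c,d]" using assms(3) yz by (simp add: successively_append_iff)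
  moreover have "d = t" using assms(4) yz by auto
  moreover have "{a,b,c,d} \<subseteq> {s,t}" using assms(2) yz by auto
  ultimately have "x @ [s] = y @ [s,t,s,t,s]" using yz assms(1) by auto
  then show thesis by (rule that)
qed

lemma cox_eq_braid_half: "adjacent s t \<Longrightarrow> cox_eq [s,t,s,t,s] [t,s,t]"
  using cox_eq_inverse[of "[s,t,s,t,s]" "[t,s,t]"] cox_eq_oct[of s t] by (simp add: oct_def)

lemma parabolic_reduced_rep:
  assumes "s \<noteq> t" "set x \<subseteq> {s,t}" "parabolic_len s t x \<le> parabolic_len s t (x @ [s])"
  obtains x' where "set x' \<subseteq> {s,t}" "cox_eq x x'" "successively (\<noteq>) x'" "x' = [] \<or> last x' = t"
    "adjacent s t \<Longrightarrow> length x' \<le> 3"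
proof -
  obtain x' where x': "set x' \<subseteq> {s,t}" "cox_eq x x'" "length x' = parabolic_len s t x"
    using parabolic_len_obtain[OF assms(2)] .
  have shorter: "False" if "cox_eq x' y" "set y \<subseteq> {s,t}" "length y < length x'" for y
    using parabolic_len_le[OF that(2) equivclp_trans[OF x'(2) that(1)]] x'(3) that(3) by simp
  have shorter_s: "False" if "cox_eq (x' @ [s]) y" "set y \<subseteq> {s,t}" "length y < length x'" for y
  proof -
    have "cox_eq (x @ [s]) (x' @ [s])" by (rule cox_eq_append[OF x'(2)]) simp
    then show False
      using parabolic_len_le[OF that(2) equivclp_trans[OF _ that(1)]] x'(3) that(3) assms(3) by fastforce
  qed
  have reduced: "successively (\<noteq>) x'"
  proof (rule ccontr)
    assume "\<not> successively (\<noteq>) x'"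
    then obtain u a v where "x' = u @ [a,a] @ v" using not_successively_neq by blast
    then show False using shorter[of "u @ v"] cox_eq_square[of u a v] x'(1) by auto
  qed
  have last: "x' = [] \<or> last x' = t"
  proof (rule ccontr)
    assume "\<not> (x' = [] \<or> last x' = t)"
    then have "x' \<noteq> []" "last x' = s" using x'(1) by (auto dest: last_in_set)
    then obtain y where "x' = y @ [s]" by (metis append_butlast_last_id)
    then show False using shorter_s[of y] cox_eq_snoc_snoc[of y s] x'(1) by auto
  qed
  have "length x' \<le> 3" if "adjacent s t"
  proof (rule ccontr)
    assume "\<not> length x' \<le> 3"
    then obtain y where y: "x' @ [s] = y @ [s,t,s,t,s]"
      using reduced_suffix_braid_half[OF assms(1) x'(1) reduced] last by fastforce
    have "cox_eq (y @ [s,t,s,t,s] @ []) (y @ [t,s,t] @ [])"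
      by (rule cox_eq_context[OF cox_eq_braid_half[OF that]])
    then show False using shorter_s[of "y @ [t,s,t]"] x'(1) y by auto
  qed
  then show thesis using that x'(1,2) reduced last by blast
qed

lemma act_sroot_parabolic:
  assumes "s \<noteq> t" "set x \<subseteq> {s,t}" "parabolic_len s t x \<le> parabolic_len s t (x @ [s])"
  shows "\<exists>A C. act x (sroot s) = root_comb A C s t \<and> 0 \<le> A \<and> 0 \<le> C"
proof -
  obtain x' where x': "set x' \<subseteq> {s,t}" "cox_eq x x'" "successively (\<noteq>) x'" "x' = [] \<or> last x' = t"
    "adjacent s t \<Longrightarrow> length x' \<le> 3"
    using parabolic_reduced_rep[OF assms] by blast
  then show ?thesis
    using act_sroot_adjacent[OF _ x'(1,3,4)] act_sroot_nonadjacent[OF assms(1) _ x'(1,3,4)]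
      cox_eq_act[OF x'(2)]
    by (cases "adjacent s t") auto
qed

subsection \<open>Positivity of roots\<close>

lemma cox_len_descent:
  assumes "cox_len w \<noteq> 0"
  obtains t where "cox_len (w @ [t]) < cox_len w"
proof -
  obtain r where r: "cox_eq w r" "length r = cox_len w" by (rule min_len_obtain)
  then obtain r' t where rt: "r = r' @ [t]" using assms by (metis append_butlast_last_id length_0_conv)
  have "cox_eq (w @ [t]) (r @ [t])" by (rule cox_eq_append[OF r(1)]) simp
  then have "cox_eq (w @ [t]) r'" using cox_eq_snoc_snoc[of r' t] rt by (auto intro: equivclp_trans)
  then have "cox_len (w @ [t]) \<le> length r'" by (rule min_len_le)
  then show thesis using that[of t] r(2) rt by simp
qed

lemma cox_len_le_factorization:
  "set x \<subseteq> {s,t} \<Longrightarrow> cox_eq w (v @ x) \<Longrightarrow> cox_len w \<le> cox_len v + parabolic_len s t x"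
  using min_len_cong[of cox_step w "v @ x"] cox_len_append[of v x] cox_len_le_parabolic_len[of x s t]
  by simp

text \<open>Choose \<open>v\<close> of minimal length among all factorisations \<open>w = v x\<close> with \<open>x \<in> \<langle>s, t\<rangle>\<close> and
  \<open>\<ell>(v) + \<ell>\<^sub>s\<^sub>t(x) = \<ell>(w)\<close>; a descent of \<open>v\<close> in \<open>{s, t}\<close> could be moved into \<open>x\<close>.\<close>

lemma minimal_parabolic_factorization:
  assumes "cox_len (w @ [t]) < cox_len w"
  obtains v x where "set x \<subseteq> {s,t}" "cox_eq w (v @ x)" "cox_len v + parabolic_len s t x = cox_len w"
    "cox_len v < cox_len w" "\<And>a. a \<in> {s,t} \<Longrightarrow> cox_len v < cox_len (v @ [a])"
proof -
  define P where "P = (\<lambda>(v, x). set x \<subseteq> {s,t} \<and> cox_eq w (v @ x)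
    \<and> cox_len v + parabolic_len s t x = cox_len w)"
  have "P (w @ [t], [t])"
    using assms cox_len_snoc[of w t] cox_eq_snoc_snoc[of w t] parabolic_len_single[of s t]
    by (auto simp: P_def intro: equivclp_sym)
  then obtain v x where vx: "P (v, x)" and least: "\<And>v' x'. P (v', x') \<Longrightarrow> cox_len v \<le> cox_len v'"
    using ex_has_least_nat[of P "(w @ [t], [t])" "\<lambda>p. cox_len (fst p)"] by fastforce
  have x: "set x \<subseteq> {s,t}" and w: "cox_eq w (v @ x)" and len: "cox_len v + parabolic_len s t x = cox_len w"
    using vx by (auto simp: P_def)
  have "cox_len v < cox_len w"
    using least[OF \<open>P (w @ [t], [t])\<close>] assms by simp
  moreover have "cox_len v < cox_len (v @ [a])" if a: "a \<in> {s,t}" for a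
  proof (rule ccontr)
    assume "\<not> cox_len v < cox_len (v @ [a])"
    then have shorter: "cox_len v = cox_len (v @ [a]) + 1" using cox_len_snoc[of v a] by auto
    have "cox_eq (v @ x) ((v @ [a]) @ (a # x))" using cox_eq_square[of v a x] by (simp add: equivclp_sym)
    then have w': "cox_eq w ((v @ [a]) @ (a # x))" using w by (rule equivclp_trans[rotated])
    have "cox_len w \<le> cox_len (v @ [a]) + parabolic_len s t (a # x)"
      using cox_len_le_factorization[OF _ w'] x a by simp
    moreover have "parabolic_len s t (a # x) \<le> parabolic_len s t x + 1" using parabolic_len_Cons[OF x a] .
    ultimately have "P (v @ [a], a # x)" using w' x a shorter len by (simp add: P_def)
    then show False using least shorter by fastforce
  qed
  ultimately show thesis using that x w len by blast
qed

text \<open>Induction on \<open>\<ell>(w)\<close>: with \<open>t\<close> a descent of \<open>w\<close> and \<open>w = v x\<close> as above,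
  \<open>w (sroot s) = A \<cdot> v (sroot s) + C \<cdot> v (sroot t)\<close> with \<open>A, C \<ge> 0\<close> by the dihedral case.\<close>

theorem positive_act_sroot: "cox_len w < cox_len (w @ [s]) \<Longrightarrow> positive (act w (sroot s))"
proof (induction "cox_len w" arbitrary: w s rule: less_induct)
  case less
  show ?case
  proof (cases "cox_len w = 0")
    case True
    then show ?thesis using cox_eq_act[OF min_len_eq_0] positive_sroot by simp
  next
    case False
    obtain t where t: "cox_len (w @ [t]) < cox_len w" using cox_len_descent[OF False] .
    then have "s \<noteq> t" using less.prems by auto
    obtain v x where x: "set x \<subseteq> {s,t}" and w: "cox_eq w (v @ x)"
      and len: "cox_len v + parabolic_len s t x = cox_len w" and "cox_len v < cox_len w"
      and "\<And>a. a \<in> {s,t} \<Longrightarrow> cox_len v < cox_len (v @ [a])"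
      using minimal_parabolic_factorization[OF t] by metis
    then have pos: "positive (act v (sroot a))" if "a \<in> {s,t}" for a
      using less.hyps that by blast
    have "parabolic_len s t x \<le> parabolic_len s t (x @ [s])"
    proof (rule ccontr)
      assume "\<not> ?thesis"
      moreover have "cox_eq (w @ [s]) (v @ (x @ [s]))" using cox_eq_append[OF w, of "[s]" "[s]"] by simp
      then have "cox_len (w @ [s]) \<le> cox_len v + parabolic_len s t (x @ [s])"
        using cox_len_le_factorization[of "x @ [s]" s t] x by simp
      ultimately show False using len less.prems by simp
    qed
    then obtain A C where AC: "act x (sroot s) = root_comb A C s t" "0 \<le> A" "0 \<le> C"
      using act_sroot_parabolic[OF \<open>s \<noteq> t\<close> x] by blast
    have "act w (sroot s) = A *\<^sub>R act v (sroot s) + C *\<^sub>R act v (sroot t)"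
      using cox_eq_act[OF w] AC(1) by (simp add: act_append root_comb_def act_add act_scaleR)
    moreover have "0 < A + C"
    proof (rule ccontr)
      assume "\<not> 0 < A + C"
      then have "A = 0" "C = 0" using AC(2,3) by auto
      then have "act x (sroot s) = 0" using AC(1) by (simp add: root_comb_def)
      then have "sroot s = 0" using act_rev(1)[of x "sroot s"] act_scaleR[of "rev x" 0 0] by simp
      then show False using positive_sroot[of s] unfolding positive_def by simp
    qed
    ultimately show ?thesis using positive_combination[OF pos pos AC(2,3)] by simp
  qed
qed

corollary negative_act_sroot: "cox_len (w @ [s]) < cox_len w \<Longrightarrow> positive (- act w (sroot s))"
  using positive_act_sroot[of "w @ [s]" s] min_len_cong[OF cox_eq_snoc_snoc[of w s]]
  by (simp add: act_append act_uminus)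

corollary positive_or_negative: "positive (act w (sroot s)) \<or> positive (- act w (sroot s))"
  using positive_act_sroot negative_act_sroot cox_len_snoc[of w s] by (metis less_add_one)

section \<open>The star of the vertex between the sides \<open>A0\<close> and \<open>A1\<close>\<close>

subsection \<open>The future light cone\<close>

definition future :: "vec \<Rightarrow> bool" where
  "future p \<longleftrightarrow> B p p < 0 \<and> 0 < snd (snd p)"

lemma B_future_neg: assumes "future p" "future v" shows "B p v < 0"
proof -
  obtain x1 x2 x3 y1 y2 y3 where p: "p = (x1, x2, x3)" and v: "v = (y1, y2, y3)" by (cases p; cases v)
  have hx: "x1^2 + x2^2 < mu * x3^2" "0 < x3" and hy: "y1^2 + y2^2 < mu * y3^2" "0 < y3"
    using assms unfolding future_def p v by (simp_all add: power2_eq_square mult.assoc)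
  have "(x1*y1 + x2*y2)^2 \<le> (x1^2 + x2^2) * (y1^2 + y2^2)"
    using zero_le_power2[of "x1*y2 - x2*y1"] by (simp add: power2_eq_square algebra_simps)
  also have "\<dots> \<le> (mu * x3^2) * (y1^2 + y2^2)"
    using hx by (intro mult_right_mono) auto
  also have "\<dots> < (mu * x3^2) * (mu * y3^2)"
    using hy hx mu_pos by (intro mult_strict_left_mono) auto
  also have "\<dots> = (mu * x3 * y3)^2" by (simp add: power2_eq_square)
  finally have "x1*y1 + x2*y2 < mu * x3 * y3"
    by (rule power_less_imp_less_base) (use mu_pos hx(2) hy(2) in simp)
  then show ?thesis by (simp add: p v)
qed

text \<open>A reflection keeps the future cone: it preserves \<open>B\<close>, and it cannot swap the two
  nappes because \<open>B (reflect a p) p \<le> B p p < 0\<close>.\<close>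

lemma future_reflect: assumes "future p" shows "future (reflect a p)"
proof -
  have bb: "B (reflect a p) (reflect a p) < 0" using assms B_reflect unfolding future_def by simp
  obtain z1 z2 z3 where z: "reflect a p = (z1, z2, z3)" by (cases "reflect a p")
  have "B (reflect a p) p = B p p - 2 * (B (sroot a) p)^2"
    unfolding reflect_def by (simp add: B_linear power2_eq_square B_sym[of p "sroot a"])
  then have "B (reflect a p) p < 0" using assms unfolding future_def by (smt (verit) zero_le_power2)
  moreover have "0 < z3"
  proof (rule ccontr)
    assume "\<not> 0 < z3"
    moreover have "z3 \<noteq> 0"
    proof
      assume "z3 = 0"
      then have "0 \<le> B (reflect a p) (reflect a p)" by (simp add: z)
      then show False using bb by simp
    qed
    ultimately have "future (- reflect a p)" using bb unfolding future_def by (simp add: z)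
    then have "B (- reflect a p) p < 0" using B_future_neg assms by blast
    then show False using \<open>B (reflect a p) p < 0\<close> by (simp add: B_linear)
  qed
  ultimately show ?thesis using bb z unfolding future_def by simp
qed

lemma future_act: "future p \<Longrightarrow> future (act w p)"
  by (induction w) (auto simp: future_reflect)

lemma future_center: "future center"
  using mu_pos unfolding future_def center_def by simp

lemma future_vertex0: "future (vertex A0)"
  using sqrt2_bounds unfolding future_def by (simp add: mu_def algebra_simps)

text \<open>\<open>tan0\<close> and \<open>tan1\<close> span the tangent plane at \<open>vertex A0\<close>; they point along the sides \<open>A0\<close>
  and \<open>A1\<close> towards the neighbouring vertices \<open>A7\<close> and \<open>A1\<close>.\<close>

definition kappa :: real where
  "kappa = 5 + 4 * sqrt2"

definition tan0 :: vec where
  "tan0 = vertex A7 - kappa *\<^sub>R vertex A0"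

definition tan1 :: vec where
  "tan1 = vertex A1 - kappa *\<^sub>R vertex A0"

lemma B_vertex0_table:
  "B (vertex A0) (vertex A0) = 82 - 58*sqrt2"
  "B (vertex A0) tan0 = 0" "B (vertex A0) tan1 = 0"
  "B tan0 tan0 = 48 - 32*sqrt2" "B tan1 tan1 = 48 - 32*sqrt2" "B tan0 tan1 = 24*sqrt2 - 32"
  "B (sroot A0) (vertex A0) = 0" "B (sroot A1) (vertex A0) = 0"
  "B (sroot A0) tan0 = 0" "B (sroot A1) tan1 = 0"
  "B (sroot A1) tan0 = 4 - 2*sqrt2" "B (sroot A0) tan1 = 4 - 2*sqrt2"
  by (simp_all add: tan0_def tan1_def kappa_def mu_def algebra_simps)

lemma star_vertices:
  "reflect A1 (vertex A7) = kappa *\<^sub>R vertex A0 + sqrt2 *\<^sub>R tan1 - tan0"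
  "reflect A0 (vertex A1) = kappa *\<^sub>R vertex A0 + sqrt2 *\<^sub>R tan0 - tan1"
  "act [A0,A1,A0] (vertex A7) = kappa *\<^sub>R vertex A0 - sqrt2 *\<^sub>R tan1 + tan0"
  "act [A1,A0,A1] (vertex A1) = kappa *\<^sub>R vertex A0 - sqrt2 *\<^sub>R tan0 + tan1"
  by (simp_all add: reflect_def tan0_def tan1_def kappa_def mu_def algebra_simps)

lemma eq_0_at_vertex0:
  assumes "B e (vertex A0) = 0" "B (sroot A0) e = 0" "B (sroot A1) e = 0"
  shows "e = 0"
proof -
  obtain e1 e2 e3 where e: "e = (e1, e2, e3)" by (cases e)
  have E0: "(1+sqrt2)*e1 + mu*(1+sqrt2)*e3 = 0" using assms(2) by (simp add: e algebra_simps)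
  have E1: "(1+sqrt2/2)*e1 + (1+sqrt2/2)*e2 + mu*(1+sqrt2)*e3 = 0" using assms(3) by (simp add: e algebra_simps)
  have E2: "(2-2*sqrt2)*e1 + (4*sqrt2-6)*e2 - mu*e3 = 0" using assms(1) by (simp add: e algebra_simps)
  have "(2+sqrt2)*(6*sqrt2-8)*((1+sqrt2)*e1 + mu*(1+sqrt2)*e3)
      - 2*(1+sqrt2)*(4*sqrt2-6)*((1+sqrt2/2)*e1 + (1+sqrt2/2)*e2 + mu*(1+sqrt2)*e3)
      + (2+sqrt2)*(1+sqrt2)*((2-2*sqrt2)*e1 + (4*sqrt2-6)*e2 - mu*e3) = e3 * (mu*(7*sqrt2-10)*(1+sqrt2))"
    by (simp add: algebra_simps mu_def)
  then have "e3 * (mu*(7*sqrt2-10)*(1+sqrt2)) = 0" using E0 E1 E2 by simp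
  then have e3: "e3 = 0" using sqrt2_bounds by (simp add: mu_def)
  then have e1: "e1 = 0" using E0 sqrt2_bounds by simp
  then have "e2 = 0" using E1 e3 sqrt2_bounds by simp
  then show ?thesis using e e1 e3 by (simp add: zero_prod_def)
qed

lemma decompose_at_vertex0:
  "p = (B p (vertex A0) / (82 - 58*sqrt2)) *\<^sub>R vertex A0
     + (B (sroot A1) p / (4 - 2*sqrt2)) *\<^sub>R tan0 + (B (sroot A0) p / (4 - 2*sqrt2)) *\<^sub>R tan1"
  (is "p = ?c")
proof -
  have "82 - 58*sqrt2 \<noteq> 0" "4 - 2*sqrt2 \<noteq> 0" using sqrt2_bounds by auto
  then have "p - ?c = 0"
    by (intro eq_0_at_vertex0)
      (simp_all add: B_linear B_vertex0_table B_sym[of tan0 "vertex A0"] B_sym[of tan1 "vertex A0"]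
        B_sym[of p "vertex A0"] del: vertex.simps sroot.simps)
  then show ?thesis by simp
qed

lemma future_coordinates_at_vertex0:
  assumes "future p"
  obtains a x y where "0 < a" "B g p = a * B g (vertex A0) + x * B g tan0 + y * B g tan1"
    "(48 - 32*sqrt2) * (x^2 + y^2) + 2 * (24*sqrt2 - 32) * x * y < a^2 * (58*sqrt2 - 82)"
    "x * (4 - 2*sqrt2) = B (sroot A1) p" "y * (4 - 2*sqrt2) = B (sroot A0) p"
proof -
  define a where "a = B p (vertex A0) / (82 - 58*sqrt2)"
  define x where "x = B (sroot A1) p / (4 - 2*sqrt2)"
  define y where "y = B (sroot A0) p / (4 - 2*sqrt2)"
  have n: "82 - 58*sqrt2 < 0" "0 < 4 - 2*sqrt2" using sqrt2_bounds by auto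
  have p: "p = a *\<^sub>R vertex A0 + x *\<^sub>R tan0 + y *\<^sub>R tan1"
    using decompose_at_vertex0[of p] unfolding a_def x_def y_def .
  have "B p (vertex A0) < 0" by (rule B_future_neg[OF assms future_vertex0])
  then have "0 < a" unfolding a_def using n by (simp add: divide_neg_neg)
  moreover have "B p p < 0" using assms unfolding future_def by simp
  then have "a^2 * (82 - 58*sqrt2) + (48 - 32*sqrt2) * (x^2 + y^2) + 2 * (24*sqrt2 - 32) * x * y < 0"
    by (subst (asm) (1 2) p)
      (simp add: B_linear B_vertex0_table B_sym[of tan0 "vertex A0"] B_sym[of tan1 "vertex A0"] B_sym[of tan1 tan0]
        power2_eq_square algebra_simps del: vertex.simps sroot.simps)
  moreover have "B g p = a * B g (vertex A0) + x * B g tan0 + y * B g tan1"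
    by (subst p) (simp add: B_linear del: vertex.simps)
  moreover have "x * (4 - 2*sqrt2) = B (sroot A1) p" "y * (4 - 2*sqrt2) = B (sroot A0) p"
    using n unfolding x_def y_def by simp_all
  ultimately show thesis using that by (simp add: algebra_simps)
qed

subsection \<open>No wall avoiding the star meets two opposite sectors\<close>

lemma linear_neg_in_sector:
  fixes a x y g0 Ga Gb :: real
  assumes "0 < x" "0 < y" "0 < a" "0 < g0" "a * g0 + x * Ga + y * Gb < 0"
  shows "min Ga Gb < 0" "a * g0 < - ((x + y) * min Ga Gb)"
proof -
  have "x * min Ga Gb \<le> x * Ga" "y * min Ga Gb \<le> y * Gb"
    using assms(1,2) by (simp_all add: mult_left_mono)
  then have "(x + y) * min Ga Gb \<le> x * Ga + y * Gb" by (simp add: algebra_simps)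
  then show *: "a * g0 < - ((x + y) * min Ga Gb)" using assms(5) by linarith
  show "min Ga Gb < 0"
  proof (rule ccontr)
    assume "\<not> ?thesis"
    then have "0 \<le> (x + y) * min Ga Gb" using assms(1,2) by (intro mult_nonneg_nonneg) auto
    then show False using * assms(3,4) by (smt (verit) mult_pos_pos)
  qed
qed

text \<open>If a linear form is negative at a timelike point \<open>a q + x t\<^sub>0 + y t\<^sub>1\<close> with \<open>x, y > 0\<close> but
  positive at \<open>q\<close>, then one of its slopes along \<open>t\<^sub>0, t\<^sub>1\<close> is large compared with its value at
  \<open>q\<close>.\<close>

lemma slope_bound_in_sector:
  fixes a x y g0 Ga Gb N d e :: real
  assumes "0 < x" "0 < y" "0 < a" "0 < N" "0 < d" "d \<le> 2 * e" "0 < g0"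
    and timelike: "d * (x^2 + y^2) + 2 * e * x * y < a^2 * N"
    and neg: "a * g0 + x * Ga + y * Gb < 0"
  shows "min Ga Gb < 0 \<and> d * g0^2 < 2 * N * (min Ga Gb)^2"
proof -
  define m where "m = min Ga Gb"
  have m: "m < 0" "a * g0 < - ((x + y) * m)"
    using linear_neg_in_sector[OF assms(1-3,7) neg] unfolding m_def by auto
  have "(a * g0)^2 < ((x + y) * m)^2"
    using m assms(3,7) power_strict_mono[of "a * g0" "- ((x + y) * m)" 2] by simp
  then have sq: "N * (a * g0)^2 < N * ((x + y) * m)^2" using assms(4) by simp
  have quad: "d * (x + y)^2 \<le> 2 * (d * (x^2 + y^2) + 2 * e * x * y)"
  proof -
    have "2 * (d * (x^2 + y^2) + 2 * e * x * y) - d * (x + y)^2 = d * (x - y)^2 + 4 * e * x * y"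
      by (simp add: algebra_simps power2_eq_square)
    moreover have "0 \<le> d * (x - y)^2" "0 \<le> 4 * e * x * y" using assms by simp_all
    ultimately show ?thesis by linarith
  qed
  have "(x + y)^2 * (d * g0^2) = g0^2 * (d * (x + y)^2)" by (simp add: algebra_simps)
  also have "\<dots> \<le> g0^2 * (2 * (d * (x^2 + y^2) + 2 * e * x * y))"
    using quad by (rule mult_left_mono) simp
  also have "\<dots> < 2 * (g0^2 * (a^2 * N))" using timelike assms(7) by simp
  also have "\<dots> = 2 * (N * (a * g0)^2)" by (simp add: algebra_simps power_mult_distrib)
  also have "\<dots> < 2 * (N * ((x + y) * m)^2)" using sq by simp
  also have "\<dots> = (x + y)^2 * (2 * N * m^2)" by (simp add: power_mult_distrib ac_simps)
  finally have "d * g0^2 < 2 * N * m^2" using assms(1,2) by (simp add: mult_less_cancel_left_pos)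
  then show ?thesis using m m_def by simp
qed

lemma opposite_slopes_contradiction:
  fixes g0 N d S K Ga Gb :: real
  assumes "0 < g0" "0 < N" "0 < d" "0 < S" "4 * N * K^2 \<le> S^2 * d"
    and "Ga < 0" "0 < Gb" "d * g0^2 < 2 * N * Ga^2" "d * g0^2 < 2 * N * Gb^2"
    and "S * (Gb - Ga) \<le> 2 * K * g0"
  shows False
proof -
  have "Ga^2 + Gb^2 \<le> (Gb - Ga)^2"
    using assms(6,7) mult_neg_pos[of Ga Gb] by (simp add: power2_eq_square algebra_simps)
  then have "2 * N * (Ga^2 + Gb^2) \<le> 2 * N * (Gb - Ga)^2" using assms(2) by simp
  then have "2 * d * g0^2 < 2 * N * (Gb - Ga)^2" using assms(8,9) by (simp add: algebra_simps)
  then have "S^2 * (2 * d * g0^2) < S^2 * (2 * N * (Gb - Ga)^2)" using assms(4) by simp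
  also have "\<dots> = 2 * N * (S * (Gb - Ga))^2" by (simp add: power_mult_distrib)
  also have "\<dots> \<le> 2 * N * (2 * K * g0)^2"
    using assms(2,4,6,7,10) power_mono[of "S * (Gb - Ga)" "2 * K * g0" 2] by simp
  also have "\<dots> = (4 * N * K^2) * (2 * g0^2)" by (simp add: power_mult_distrib)
  also have "\<dots> \<le> (S^2 * d) * (2 * g0^2)" by (rule mult_right_mono[OF assms(5)]) simp
  finally show False by (simp add: algebra_simps)
qed

lemma future_slope_bound:
  assumes "future p" "0 < B g (vertex A0)" "B g p < 0" "e * e = 1"
    "0 < e * B (sroot A0) p" "0 < e * B (sroot A1) p"
  shows "min (e * B g tan0) (e * B g tan1) < 0 \<and>
    (48 - 32*sqrt2) * (B g (vertex A0))^2 < 2 * (58*sqrt2 - 82) * (min (e * B g tan0) (e * B g tan1))^2"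
proof -
  obtain a x y where a: "0 < a" and g: "B g p = a * B g (vertex A0) + x * B g tan0 + y * B g tan1"
    and timelike: "(48 - 32*sqrt2) * (x^2 + y^2) + 2 * (24*sqrt2 - 32) * x * y < a^2 * (58*sqrt2 - 82)"
    and x: "x * (4 - 2*sqrt2) = B (sroot A1) p" and y: "y * (4 - 2*sqrt2) = B (sroot A0) p"
    using future_coordinates_at_vertex0[OF assms(1)] by blast
  have n: "0 < 4 - 2*sqrt2" "0 < 48 - 32*sqrt2" "48 - 32*sqrt2 \<le> 2 * (24*sqrt2 - 32)" "0 < 58*sqrt2 - 82"
    using sqrt2_bounds by auto
  have e: "e = 1 \<or> e = -1" using assms(4) power2_eq_1_iff[of e] by (simp add: power2_eq_square)
  have "0 < (e * x) * (4 - 2*sqrt2)" "0 < (e * y) * (4 - 2*sqrt2)"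
    using x y assms(5,6) by (simp_all add: mult.assoc)
  then have "0 < e * x" "0 < e * y" using n(1) by (simp_all add: zero_less_mult_iff)
  moreover have "(48 - 32*sqrt2) * ((e * x)^2 + (e * y)^2) + 2 * (24*sqrt2 - 32) * (e * x) * (e * y)
      < a^2 * (58*sqrt2 - 82)"
    using timelike e by auto
  moreover have "a * B g (vertex A0) + (e * x) * (e * B g tan0) + (e * y) * (e * B g tan1) < 0"
    using g assms(3) e by auto
  ultimately show ?thesis
    using slope_bound_in_sector[OF _ _ a n(4) n(2) n(3) assms(2)] by blast
qed

text \<open>The four points below are images of the vertices \<open>A7\<close> and \<open>A1\<close> under the stabiliser
  \<open>\<langle>A0, A1\<rangle>\<close> of \<open>vertex A0\<close>, hence vertices of its star.\<close>

theorem star_wall_separation: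
  assumes "0 < B g (vertex A0)"
    and "0 \<le> B g (reflect A1 (vertex A7))" "0 \<le> B g (reflect A0 (vertex A1))"
    and "0 \<le> B g (act [A0,A1,A0] (vertex A7))" "0 \<le> B g (act [A1,A0,A1] (vertex A1))"
    and "future p1" "B g p1 < 0" "0 < B (sroot A0) p1" "0 < B (sroot A1) p1"
    and "future p2" "B g p2 < 0" "B (sroot A0) p2 < 0" "B (sroot A1) p2 < 0"
  shows False
proof -
  define G0 Ga Gb where "G0 = B g (vertex A0)" and "Ga = B g tan0" and "Gb = B g tan1"
  have star: "0 \<le> kappa * G0 + sqrt2 * Gb - Ga" "0 \<le> kappa * G0 + sqrt2 * Ga - Gb"
    "0 \<le> kappa * G0 - sqrt2 * Gb + Ga" "0 \<le> kappa * G0 - sqrt2 * Ga + Gb"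
    using assms(2-5) unfolding star_vertices G0_def Ga_def Gb_def
    by (simp_all add: B_linear del: vertex.simps sroot.simps)
  have n: "0 < 48 - 32*sqrt2" "0 < 58*sqrt2 - 82" "0 < 1 + sqrt2" using sqrt2_bounds by auto
  have "0 < G0" using assms(1) G0_def by simp
  have h1: "min Ga Gb < 0" "(48 - 32*sqrt2) * G0^2 < 2 * (58*sqrt2 - 82) * (min Ga Gb)^2"
    using future_slope_bound[of p1 g 1] assms(1,6-9) unfolding G0_def Ga_def Gb_def by simp_all
  have h2: "min (- Ga) (- Gb) < 0" "(48 - 32*sqrt2) * G0^2 < 2 * (58*sqrt2 - 82) * (min (- Ga) (- Gb))^2"
    using future_slope_bound[of p2 g "-1"] assms(1,10-13) unfolding G0_def Ga_def Gb_def by simp_all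
  have K: "4 * (58*sqrt2 - 82) * kappa^2 \<le> (1 + sqrt2)^2 * (48 - 32*sqrt2)"
  proof -
    have "4 * (58*sqrt2 - 82) * kappa^2 = 104*sqrt2 - 136" by (simp add: kappa_def power2_eq_square algebra_simps)
    moreover have "(1 + sqrt2)^2 * (48 - 32*sqrt2) = 16" by (simp add: power2_eq_square algebra_simps)
    ultimately show ?thesis using sqrt2_bounds by simp
  qed
  show False
  proof (cases "Ga \<le> Gb")
    case True
    have "(1 + sqrt2) * (Gb - Ga) \<le> 2 * kappa * G0" using star(2,3) by (simp add: algebra_simps)
    then show False using opposite_slopes_contradiction[OF \<open>0 < G0\<close> n(2,1,3) K, of Ga Gb] h1 h2 True
      by (simp add: min_def split: if_splits)
  next
    case False
    have "(1 + sqrt2) * (Ga - Gb) \<le> 2 * kappa * G0" using star(1,4) by (simp add: algebra_simps)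
    then show False using opposite_slopes_contradiction[OF \<open>0 < G0\<close> n(2,1,3) K, of Gb Ga] h1 h2 False
      by (simp add: min_def split: if_splits)
  qed
qed

subsection \<open>The longest element of \<open>\<langle>A0, A1\<rangle>\<close>\<close>

definition w0 :: "side list" where
  "w0 = [A0,A1,A0,A1]"

lemma length_w0 [simp]: "length w0 = 4"
  by (simp add: w0_def)

lemma adjacent_A0_A1: "adjacent A0 A1"
  by (simp add: adjacent_def)

lemma cox_eq_w0_rev: "cox_eq w0 (rev w0)"
  using cox_eq_inverse[of w0 w0] cox_eq_oct[OF adjacent_A0_A1] by (simp add: oct_def w0_def)

lemma w0_starts_and_ends_with:
  assumes "a \<in> {A0, A1}"
  obtains u v where "length u = 3" "cox_eq w0 (a # u)" "length v = 3" "cox_eq w0 (v @ [a])"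
proof (cases "a = A0")
  case True
  then show thesis using that[of "[A1,A0,A1]" "[A1,A0,A1]"] cox_eq_w0_rev by (auto simp: w0_def)
next
  case False
  then show thesis using that[of "[A0,A1,A0]" "[A0,A1,A0]"] cox_eq_w0_rev assms by (auto simp: w0_def)
qed

lemma ascent_before_w0:
  assumes "cox_len (Y @ w0) = cox_len Y + 4" "a \<in> {A0, A1}"
  shows "cox_len Y < cox_len (Y @ [a])"
proof (rule ccontr)
  assume "\<not> ?thesis"
  then have "cox_len Y = cox_len (Y @ [a]) + 1" using cox_len_snoc[of Y a] by auto
  obtain u where u: "length u = 3" "cox_eq w0 (a # u)" using w0_starts_and_ends_with[OF assms(2)] by metis
  have "cox_len (Y @ w0) = cox_len ((Y @ [a]) @ u)"
    using min_len_cong[OF cox_eq_append[OF equivclp_refl u(2)]] by simp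
  also have "\<dots> \<le> cox_len (Y @ [a]) + 3" using cox_len_append[of "Y @ [a]" u] min_len_le_length[of _ u] u(1)
    by (metis add_left_mono order_trans)
  finally show False using assms(1) \<open>cox_len Y = _\<close> by simp
qed

lemma ascent_after_w0:
  assumes "cox_len (w0 @ Z) = 4 + length Z" "a \<in> {A0, A1}"
  shows "cox_len Z < cox_len (a # Z)"
proof (rule ccontr)
  assume "\<not> ?thesis"
  then have "cox_len Z = cox_len (a # Z) + 1" using cox_len_cons[of a Z] by auto
  obtain v where v: "length v = 3" "cox_eq w0 (v @ [a])" using w0_starts_and_ends_with[OF assms(2)] by metis
  have "cox_len (w0 @ Z) = cox_len (v @ (a # Z))"
    using min_len_cong[OF cox_eq_append[OF v(2) equivclp_refl]] by simp
  also have "\<dots> \<le> 3 + cox_len (a # Z)" using cox_len_append[of v "a # Z"] min_len_le_length[of _ v] v(1)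
    by (metis add_right_mono order_trans)
  finally show False using assms(1) \<open>cox_len Z = _\<close> min_len_le_length[of cox_step Z] by simp
qed

lemma act_fixes_vertex0: "set u \<subseteq> {A0, A1} \<Longrightarrow> act u (vertex A0) = vertex A0"
proof (induction u)
  case (Cons a u)
  then have "a \<in> {A0, A1}" by simp
  then show ?case using Cons by (auto simp: reflect_def B_vertex0_table simp del: vertex.simps sroot.simps)
qed simp

text \<open>On the tangent plane at \<open>vertex A0\<close> the element \<open>w0\<close> is the rotation by \<open>\<pi>\<close>.\<close>

lemma act_w0_orthogonal: assumes "B x (vertex A0) = 0" shows "act w0 x = - x"
proof -
  define x1 y1 where "x1 = B (sroot A1) x / (4 - 2*sqrt2)" and "y1 = B (sroot A0) x / (4 - 2*sqrt2)"
  have x: "x = x1 *\<^sub>R tan0 + y1 *\<^sub>R tan1"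
    using decompose_at_vertex0[of x] assms unfolding x1_def y1_def by (simp del: vertex.simps sroot.simps)
  have "act w0 tan0 = - tan0" "act w0 tan1 = - tan1"
    by (simp_all add: w0_def reflect_def tan0_def tan1_def kappa_def mu_def algebra_simps)
  then show ?thesis by (subst (1 2) x) (simp add: act_add act_scaleR)
qed

lemma act_w0_sroot: assumes "a \<in> {A0, A1}" shows "act w0 (sroot a) = - sroot a"
proof (rule act_w0_orthogonal)
  show "B (sroot a) (vertex A0) = 0" using assms B_vertex0_table(7,8) by auto
qed

lemma act_rev_w0: "act (rev w0) = act w0"
  using cox_eq_act[OF cox_eq_w0_rev] by simp

text \<open>A root that is positive at \<open>vertex A0\<close> is non-negative on the whole star of the vertex, since
  the roots \<open>u\<^sup>-\<^sup>1 \<gamma>\<close> stay positive at the fixed point \<open>vertex A0\<close> of \<open>u\<close>.\<close>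

lemma root_nonneg_on_star:
  assumes "set u \<subseteq> {A0, A1}" "0 < B (act W (sroot r)) (vertex A0)"
  shows "0 \<le> B (act W (sroot r)) (act u (vertex k))"
proof -
  define X where "X = act (rev u) (act W (sroot r))"
  have X: "act u X = act W (sroot r)" unfolding X_def by simp
  have "B X (vertex A0) = B (act W (sroot r)) (vertex A0)"
    using B_act[of u X "vertex A0"] X act_fixes_vertex0[OF assms(1)] by simp
  have "\<not> positive (- X)"
  proof
    assume "positive (- X)"
    then have "0 \<le> B (- X) (vertex A0)" unfolding positive_def by blast
    then show False using assms(2) \<open>B X (vertex A0) = _\<close> by (simp add: B_linear del: vertex.simps)
  qed
  then have "positive X" using positive_or_negative[of "rev u @ W" r] by (simp add: X_def act_append)
  then have "0 \<le> B X (vertex k)" unfolding positive_def by blast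
  then show ?thesis using B_act[of u X "vertex k"] X by simp
qed

lemma root_positive_at_vertex0:
  assumes "positive \<beta>" "positive (act w0 \<beta>)"
  shows "0 < B (act w0 \<beta>) (vertex A0)"
proof -
  have "0 \<le> B (act w0 \<beta>) (vertex A0)" using assms(2) unfolding positive_def by blast
  moreover have "B (act w0 \<beta>) (vertex A0) \<noteq> 0"
  proof
    assume "B (act w0 \<beta>) (vertex A0) = 0"
    then have "act w0 (act w0 \<beta>) = - act w0 \<beta>" by (rule act_w0_orthogonal)
    moreover have "act w0 (act w0 \<beta>) = \<beta>" using act_oct[OF adjacent_A0_A1, of \<beta>] by (simp add: oct_def w0_def)
    ultimately show False using assms not_positive_uminus by metis
  qed
  ultimately show ?thesis by simp
qed

lemma B_act_rev: "B v (act (rev w) p) = B (act w v) p"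
  using B_act[of w v "act (rev w) p"] by simp

subsection \<open>Concatenation across \<open>w0\<close>\<close>

lemma prefix_witness:
  assumes "cox_len (Y @ w0) = cox_len Y + 4" "positive (- act Y \<gamma>)"
  shows "future (act (rev Y) center)" "B \<gamma> (act (rev Y) center) < 0"
    "0 < B (sroot A0) (act (rev Y) center)" "0 < B (sroot A1) (act (rev Y) center)"
proof -
  show "future (act (rev Y) center)" by (rule future_act[OF future_center])
  show "B \<gamma> (act (rev Y) center) < 0"
    using positive_B_center[OF assms(2)] by (simp add: B_act_rev B_linear)
  have "0 < B (sroot a) (act (rev Y) center)" if "a \<in> {A0, A1}" for a
    using positive_B_center[OF positive_act_sroot[OF ascent_before_w0[OF assms(1) that]]]
    by (simp add: B_act_rev)
  then show "0 < B (sroot A0) (act (rev Y) center)" "0 < B (sroot A1) (act (rev Y) center)" by blast+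
qed

lemma act_rev_snoc_sroot: "act (rev (W @ [r])) (act W (sroot r)) = - sroot r"
  by simp

lemma suffix_witness:
  assumes "cox_len (w0 @ Z) = 4 + length Z" "Z = Z' @ [r]"
  defines "p \<equiv> act (w0 @ Z) center"
  shows "future p" "B (act (w0 @ Z') (sroot r)) p < 0" "B (sroot A0) p < 0" "B (sroot A1) p < 0"
proof -
  show "future p" unfolding p_def by (rule future_act[OF future_center])
  have p: "p = act (rev (rev (w0 @ Z))) center" by (simp only: p_def rev_rev_ident)
  have "B (act (w0 @ Z') (sroot r)) p = - B (sroot r) center"
    unfolding p B_act_rev assms(2) append_assoc[symmetric] act_rev_snoc_sroot by (simp add: B_linear)
  then show "B (act (w0 @ Z') (sroot r)) p < 0" using positive_B_center[OF positive_sroot[of r]] by simp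
  have "B (sroot a) p < 0" if "a \<in> {A0, A1}" for a
  proof -
    have "cox_len (rev Z) < cox_len (rev Z @ [a])"
      using ascent_after_w0[OF assms(1) that] cox_len_rev[of "a # Z"] cox_len_rev[of Z] by simp
    then have "0 < B (act (rev Z) (sroot a)) center"
      using positive_B_center positive_act_sroot by blast
    moreover have "act (rev w0) (sroot a) = - sroot a" using act_rev_w0 act_w0_sroot[OF that] by simp
    then have "B (sroot a) p = - B (act (rev Z) (sroot a)) center"
      unfolding p B_act_rev by (simp only: rev_append act_append act_uminus B_linear)
    ultimately show ?thesis by simp
  qed
  then show "B (sroot A0) p < 0" "B (sroot A1) p < 0" by blast+
qed

text \<open>If the last letter \<open>r\<close> were a descent of \<open>Y w0 Z' r\<close>, the wall of the root
  \<open>\<gamma> = w0 Z' (sroot r)\<close> would avoid the star of \<open>vertex A0\<close> but separate it from points in two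
  opposite sectors at the vertex, which \<open>star_wall_separation\<close> rules out.\<close>

theorem cox_len_append_w0:
  assumes "cox_len (Y @ w0) = cox_len Y + 4" "cox_len (w0 @ Z) = 4 + length Z"
  shows "cox_len (Y @ w0 @ Z) = cox_len Y + 4 + length Z"
  using assms(2)
proof (induction Z rule: rev_induct)
  case Nil
  then show ?case using assms(1) by simp
next
  case (snoc r Z')
  have Z: "cox_len (w0 @ Z' @ [r]) = 5 + length Z'" using snoc.prems by simp
  have Z': "cox_len (w0 @ Z') = 4 + length Z'"
    using Z min_len_le_length[of cox_step "w0 @ Z'"] cox_len_snoc[of "w0 @ Z'" r] by auto
  then have IH: "cox_len (Y @ w0 @ Z') = cox_len Y + 4 + length Z'" using snoc.IH by simp
  show ?case
  proof (rule ccontr)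
    assume "\<not> ?case"
    then have "cox_len ((Y @ w0 @ Z') @ [r]) < cox_len (Y @ w0 @ Z')"
      using cox_len_snoc[of "Y @ w0 @ Z'" r] IH by auto
    from negative_act_sroot[OF this] have descent: "positive (- act Y (act (w0 @ Z') (sroot r)))"
      by (simp add: act_append)
    define \<gamma> where "\<gamma> = act (w0 @ Z') (sroot r)"
    have "cox_len Z' < cox_len (Z' @ [r])"
      using Z cox_len_append[of w0 "Z' @ [r]"] min_len_le_length[of cox_step w0]
        min_len_le_length[of cox_step Z'] by simp
    then have "positive (act Z' (sroot r))" by (rule positive_act_sroot)
    moreover have "positive \<gamma>" unfolding \<gamma>_def using positive_act_sroot Z Z' by simp
    ultimately have g0: "0 < B \<gamma> (vertex A0)"
      using root_positive_at_vertex0 unfolding \<gamma>_def by (simp add: act_append)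
    have star: "0 \<le> B \<gamma> (act u (vertex k))" if "set u \<subseteq> {A0, A1}" for u k
      using root_nonneg_on_star[OF that g0[unfolded \<gamma>_def]] unfolding \<gamma>_def .
    have "0 \<le> B \<gamma> (reflect A1 (vertex A7))" "0 \<le> B \<gamma> (reflect A0 (vertex A1))"
      "0 \<le> B \<gamma> (act [A0,A1,A0] (vertex A7))" "0 \<le> B \<gamma> (act [A1,A0,A1] (vertex A1))"
      using star[of "[A1]" A7] star[of "[A0]" A1] star[of "[A0,A1,A0]" A7] star[of "[A1,A0,A1]" A1]
      by simp_all
    then show False
      using star_wall_separation[OF g0]
        prefix_witness[OF assms(1) descent[folded \<gamma>_def]] suffix_witness[OF snoc.prems refl, folded \<gamma>_def]
      by simp
  qed
qed

section \<open>The surface group inside the reflection group\<close>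

lemma geq_equivclp: "geq = equivclp rstep"
  by (simp add: geq_def equivclp_def symclp_pointfree)

lemma wlen_eq_min_len: "wlen = min_len rstep"
  by (simp add: fun_eq_iff wlen_def min_len_def geq_equivclp)

lemmas geq_refl [simp] = equivclp_refl[of rstep, folded geq_equivclp]
lemmas geq_sym = equivclp_sym[of rstep, folded geq_equivclp]
lemmas geq_trans [trans] = equivclp_trans[of rstep, folded geq_equivclp]

lemma rstep_context: "rstep a b \<Longrightarrow> rstep (u @ a @ v) (u @ b @ v)"
proof (induction rule: rstep.induct)
  case (free u' x v') show ?case using rstep.free[of "u @ u'" x "v' @ v"] by simp
next
  case (rel u' v') show ?case using rstep.rel[of "u @ u'" "v' @ v"] by simp
qed

lemma geq_context: "geq a b \<Longrightarrow> geq (u @ a @ v) (u @ b @ v)"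
  unfolding geq_equivclp by (rule equivclp_context[of rstep, OF rstep_context])

lemma geq_append: "geq a b \<Longrightarrow> geq c d \<Longrightarrow> geq (a @ c) (b @ d)"
  unfolding geq_equivclp by (rule equivclp_append[of rstep, OF rstep_context])

lemma geq_cancel: "geq (u @ [x, linv x] @ v) (u @ v)"
  unfolding geq_equivclp by (rule r_into_equivclp, rule rstep.free)

lemma geq_relator: "geq relator []"
  unfolding geq_equivclp using rstep.rel[of "[]" "[]"] by auto

lemma wlen_cong: "geq a b \<Longrightarrow> wlen a = wlen b"
  unfolding wlen_eq_min_len geq_equivclp by (rule min_len_cong)

lemma wlen_append: "wlen (a @ b) \<le> wlen a + wlen b"
  unfolding wlen_eq_min_len by (rule min_len_append[of rstep, OF rstep_context])

lemma wlen_obtain: obtains v where "geq w v" "length v = wlen w"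
  unfolding wlen_eq_min_len geq_equivclp by (rule min_len_obtain)

lemma linv_linv [simp]: "linv (linv x) = x"
  by (simp add: linv_def)

definition winv :: "word \<Rightarrow> word" where
  "winv w = rev (map linv w)"

lemma geq_append_winv: "geq (w @ winv w) []"
proof (induction w)
  case (Cons x w)
  have "geq ([x] @ (w @ winv w) @ [linv x]) ([x] @ [] @ [linv x])" by (rule geq_context[OF Cons])
  then show ?case using geq_cancel[of "[]" x "[]"] by (auto simp: winv_def intro: geq_trans)
qed (simp add: winv_def)

lemma geq_rotate1: "geq (x # w) [] \<Longrightarrow> geq (w @ [x]) []"
proof -
  assume h: "geq (x # w) []"
  have "geq (w @ [x]) ([linv x] @ (x # w) @ [x])"
    using geq_cancel[of "[]" "linv x" "w @ [x]"] by (simp add: geq_sym)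
  also have "geq ([linv x] @ (x # w) @ [x]) ([linv x] @ [] @ [x])" by (rule geq_context[OF h])
  also have "geq ([linv x] @ [] @ [x]) []" using geq_cancel[of "[]" "linv x" "[]"] by simp
  finally show ?thesis .
qed

lemma geq_rotate: "geq r [] \<Longrightarrow> geq (rotate k r) []"
proof (induction k)
  case (Suc k)
  then show ?case using geq_rotate1 by (cases "rotate k r") (auto simp: rotate_Suc)
qed simp

lemma geq_relator_inv: "geq relator_inv []"
proof -
  have inv: "relator_inv = winv relator" "winv (winv relator) = relator"
    by (simp_all add: relator_inv_def relator_def winv_def linv_def)
  have "geq (winv relator) (winv relator @ relator)"
    using geq_append[OF geq_refl geq_relator, of "winv relator"] by (simp add: geq_sym)
  also have "geq (winv relator @ relator) []" using geq_append_winv[of "winv relator"] inv by simp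
  finally show ?thesis using inv by simp
qed

text \<open>The regular octagon with angles \<open>\<pi>/4\<close> is a fundamental domain of \<open>\<Gamma>\<^sub>2\<close>, whose generators
  identify its sides pairwise: the letter \<open>x\<close> crosses the side \<open>letter_side x\<close> into the neighbouring
  octagon, whose labelling differs from the current one by the symmetry \<open>letter_dih x\<close>. The shadow
  of a word is the sequence of crossed walls, i.e. a word in the reflection group; \<open>lift\<close> inverts it.\<close>

fun letter_side :: "letter \<Rightarrow> side" where
  "letter_side (Ga, True) = A0" | "letter_side (Ga, False) = A2"
| "letter_side (Gb, True) = A3" | "letter_side (Gb, False) = A1"
| "letter_side (Gc, True) = A4" | "letter_side (Gc, False) = A6"
| "letter_side (Gd, True) = A7" | "letter_side (Gd, False) = A5"

fun side_letter :: "side \<Rightarrow> letter" where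
  "side_letter A0 = (Ga, True)" | "side_letter A2 = (Ga, False)"
| "side_letter A3 = (Gb, True)" | "side_letter A1 = (Gb, False)"
| "side_letter A4 = (Gc, True)" | "side_letter A6 = (Gc, False)"
| "side_letter A7 = (Gd, True)" | "side_letter A5 = (Gd, False)"

lemma side_letter_letter_side [simp]: "side_letter (letter_side x) = x"
  by (cases x; cases "fst x"; cases "snd x") auto

lemma letter_side_side_letter [simp]: "letter_side (side_letter a) = a"
  by (cases a) auto

fun letter_dih :: "letter \<Rightarrow> dihedral" where
  "letter_dih (Ga, _) = (False, A2)" | "letter_dih (Gc, _) = (False, A2)"
| "letter_dih (Gb, _) = (False, A4)" | "letter_dih (Gd, _) = (False, A4)"

primrec shadow :: "dihedral \<Rightarrow> word \<Rightarrow> side list" where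
  "shadow f [] = []"
| "shadow f (x # w) = dih_app f (letter_side x) # shadow (dih_comp f (letter_dih x)) w"

primrec end_dih :: "dihedral \<Rightarrow> word \<Rightarrow> dihedral" where
  "end_dih f [] = f"
| "end_dih f (x # w) = end_dih (dih_comp f (letter_dih x)) w"

definition lift_letter :: "dihedral \<Rightarrow> side \<Rightarrow> letter" where
  "lift_letter f s = side_letter (dih_app (dih_inv f) s)"

primrec lift :: "dihedral \<Rightarrow> side list \<Rightarrow> word" where
  "lift f [] = []"
| "lift f (s # r) = lift_letter f s # lift (dih_comp f (letter_dih (lift_letter f s))) r"

lemma dih_app_lift_letter [simp]: "dih_app f (letter_side (lift_letter f s)) = s"
  unfolding lift_letter_def by simp

lemma lift_letter_eqI: "dih_app f (letter_side x) = s \<Longrightarrow> lift_letter f s = x"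
  unfolding lift_letter_def by (metis dih_app_inv_left side_letter_letter_side)

lemma lift_shadow [simp]: "lift f (shadow f w) = w"
  by (induction w arbitrary: f) (auto simp: lift_letter_eqI)

lemma length_shadow [simp]: "length (shadow f w) = length w"
  by (induction w arbitrary: f) auto

lemma length_lift [simp]: "length (lift f r) = length r"
  by (induction r arbitrary: f) auto

lemma shadow_append: "shadow f (u @ v) = shadow f u @ shadow (end_dih f u) v"
  by (induction u arbitrary: f) auto

lemma end_dih_append: "end_dih f (u @ v) = end_dih (end_dih f u) v"
  by (induction u arbitrary: f) auto

lemma end_dih_comp: "end_dih (dih_comp g f) w = dih_comp g (end_dih f w)"
  by (induction w arbitrary: f) (auto simp: dih_comp_assoc)

lemma shadow_comp: "shadow (dih_comp g f) w = map (dih_app g) (shadow f w)"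
  by (induction w arbitrary: f) (auto simp: dih_comp_assoc dih_app_comp)

lemma lift_append: "lift f (r @ r') = lift f r @ lift (end_dih f (lift f r)) r'"
  by (induction r arbitrary: f) auto

lemma lift_map: "lift (dih_comp g h) (map (dih_app g) r) = lift h r"
proof (induction r arbitrary: h)
  case (Cons s r)
  have "lift_letter (dih_comp g h) (dih_app g s) = lift_letter h s"
    by (rule lift_letter_eqI) (simp add: dih_app_comp)
  then show ?case using Cons by (simp add: dih_comp_assoc)
qed simp

subsection \<open>Word length in the surface group is Coxeter length of the shadow\<close>

lemma letter_dih_linv: "dih_comp (letter_dih x) (letter_dih (linv x)) = dih_id"
  by (cases x; cases "fst x") (auto simp: linv_def dih_id_def side_of_int_def)

lemma letter_dih_letter_side: "dih_app (letter_dih x) (letter_side (linv x)) = letter_side x"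
  by (cases x; cases "fst x"; cases "snd x") (auto simp: linv_def side_of_int_def)

lemma shadow_relator: "shadow f relator = oct (dih_app f A0) (dih_app f A7)"
proof -
  have "shadow dih_id relator = oct A0 A7"
    by (simp add: relator_def oct_def dih_id_def side_of_int_def)
  then show ?thesis using shadow_comp[of f dih_id relator] by (simp add: map_oct)
qed

lemma end_dih_relator: "end_dih f relator = f"
proof -
  have "end_dih dih_id relator = dih_id"
    by (simp add: relator_def dih_id_def side_of_int_def)
  then show ?thesis using end_dih_comp[of f dih_id relator] by simp
qed

lemma rstep_shadow: "rstep a b \<Longrightarrow> cox_eq (shadow f a) (shadow f b)"
proof (induction rule: rstep.induct)
  case (free u x v)
  show ?case
    using cox_eq_square[of "shadow f u" "dih_app (end_dih f u) (letter_side x)" "shadow (end_dih f u) v"]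
    by (simp add: shadow_append end_dih_append dih_app_comp letter_dih_letter_side dih_comp_assoc
      letter_dih_linv)
next
  case (rel u v)
  have "adjacent A0 A7" by (simp add: adjacent_def)
  then have "adjacent (dih_app (end_dih f u) A0) (dih_app (end_dih f u) A7)" by simp
  then show ?case
    using cox_eq_context[OF cox_eq_oct, of _ _ "shadow f u" "shadow (end_dih f u) v"]
    by (simp add: shadow_append shadow_relator end_dih_append end_dih_relator)
qed

lemma geq_shadow: "geq a b \<Longrightarrow> cox_eq (shadow f a) (shadow f b)"
  unfolding geq_equivclp by (rule equivclp_transfer) (rule rstep_shadow)

definition relator_rotations :: "word list" where
  "relator_rotations = [relator, rotate 1 relator, rotate 2 relator, rotate 3 relator, rotate 4 relator,
    rotate 5 relator, rotate 6 relator, rotate 7 relator,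
    relator_inv, rotate 1 relator_inv, rotate 2 relator_inv, rotate 3 relator_inv, rotate 4 relator_inv,
    rotate 5 relator_inv, rotate 6 relator_inv, rotate 7 relator_inv]"

lemma geq_relator_rotations: "c \<in> set relator_rotations \<Longrightarrow> geq c []"
  unfolding relator_rotations_def
  using geq_rotate[OF geq_relator] geq_rotate[OF geq_relator_inv] geq_relator geq_relator_inv
  by (auto simp del: rotate_Suc)

lemma end_dih_relator_rotations: "c \<in> set relator_rotations \<Longrightarrow> end_dih f c = f"
proof -
  assume "c \<in> set relator_rotations"
  then have "end_dih dih_id c = dih_id"
    unfolding relator_rotations_def
    by (auto simp: relator_def relator_inv_def dih_id_def side_of_int_def numeral_eq_Suc rotate_Suc)
  then show ?thesis using end_dih_comp[of f dih_id c] by simp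
qed

lemma lift_oct: assumes "adjacent a b" shows "lift g (oct a b) \<in> set relator_rotations"
proof -
  define a' b' where "a' = dih_app (dih_inv g) a" and "b' = dih_app (dih_inv g) b"
  have "adjacent a' b'" unfolding a'_def b'_def using assms by simp
  then have "lift dih_id (oct a' b') \<in> set relator_rotations"
    by (cases a'; cases b')
      (simp_all add: adjacent_def oct_def relator_rotations_def relator_def relator_inv_def
        dih_id_def side_of_int_def numeral_eq_Suc rotate_Suc lift_letter_def)
  moreover have "lift g (oct a b) = lift (dih_comp g dih_id) (map (dih_app g) (oct a' b'))"
    unfolding a'_def b'_def by (simp add: map_oct)
  ultimately show ?thesis by (simp only: lift_map)
qed

lemma cox_step_lift: "cox_step r r' \<Longrightarrow> geq (lift f r) (lift f r')"
proof (induction rule: cox_step.induct)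
  case (cancel u a v)
  define g where "g = end_dih f (lift f u)"
  have "lift_letter (dih_comp g (letter_dih (lift_letter g a))) a = linv (lift_letter g a)"
    by (rule lift_letter_eqI) (simp add: dih_app_comp letter_dih_letter_side)
  then have aa: "lift g [a,a] = [lift_letter g a, linv (lift_letter g a)]" by simp
  have "lift f (u @ [a,a] @ v) = lift f u @ lift g [a,a] @ lift (end_dih g (lift g [a,a])) v"
    by (simp only: lift_append g_def)
  also have "\<dots> = lift f u @ [lift_letter g a, linv (lift_letter g a)] @ lift g v"
    unfolding aa by (simp add: dih_comp_assoc letter_dih_linv)
  finally have "lift f (u @ [a,a] @ v) = lift f u @ [lift_letter g a, linv (lift_letter g a)] @ lift g v" .
  moreover have "lift f (u @ v) = lift f u @ lift g v" by (simp only: lift_append g_def)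
  ultimately show ?case by (simp only: geq_cancel)
next
  case (braid a b u v)
  define g where "g = end_dih f (lift f u)"
  have c: "lift g (oct a b) \<in> set relator_rotations" by (rule lift_oct[OF braid])
  then have "lift f (u @ oct a b @ v) = lift f u @ lift g (oct a b) @ lift g v"
    by (simp add: lift_append g_def end_dih_relator_rotations)
  then show ?case using geq_context[OF geq_relator_rotations[OF c], of "lift f u" "lift g v"]
    by (simp add: lift_append g_def)
qed

theorem wlen_eq_cox_len_shadow: "wlen w = cox_len (shadow f w)"
proof -
  obtain v where v: "geq w v" "length v = wlen w" by (rule wlen_obtain)
  have "cox_len (shadow f w) \<le> wlen w" using min_len_le[OF geq_shadow[OF v(1)]] v(2) by simp
  moreover obtain r where r: "cox_eq (shadow f w) r" "length r = cox_len (shadow f w)"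
    by (rule min_len_obtain)
  have "geq (lift f (shadow f w)) (lift f r)"
    using r(1) geq_equivclp by (metis equivclp_transfer cox_step_lift)
  then have "wlen w \<le> length (lift f r)"
    using min_len_le[of rstep w "lift f r"] by (simp add: wlen_eq_min_len geq_equivclp)
  ultimately show ?thesis using r(2) by simp
qed

section \<open>Geodesics through a piece of the relator\<close>

definition relator_pieces :: "word list" where
  "relator_pieces = concat (map (\<lambda>c. map (\<lambda>i. take 4 (drop i c)) [0,1,2,3,4]) relator_rotations)"

lemma rotate_relator_in_rotations:
  assumes "r \<in> {relator, relator_inv}" shows "rotate k r \<in> set relator_rotations"
proof -
  have "length r = 8" using assms by (auto simp: relator_def relator_inv_def)
  then have "rotate k r = rotate (k mod 8) r" using rotate_conv_mod[of k r] by simp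
  moreover have "k mod 8 \<in> {0,1,2,3,4,5,6,7}" by auto
  ultimately show ?thesis using assms unfolding relator_rotations_def by (auto simp del: rotate_Suc)
qed

lemma inR_in_relator_pieces:
  assumes "inR U" "length U = 4"
  shows "U \<in> set relator_pieces"
proof -
  obtain r k p s where r: "r \<in> {relator, relator_inv}" and e: "rotate k r = p @ U @ s"
    using assms(1) unfolding inR_def by blast
  have c: "rotate k r \<in> set relator_rotations" by (rule rotate_relator_in_rotations[OF r])
  have "length (rotate k r) = 8" using r by (auto simp: relator_def relator_inv_def)
  then have "length p \<le> 4" using e assms(2) by simp
  then have "length p \<in> {0,1,2,3,4}" by (simp add: le_Suc_eq numeral_eq_Suc)
  moreover have "U = take 4 (drop (length p) (rotate k r))" using e assms(2) by simp
  ultimately show ?thesis unfolding relator_pieces_def using c by force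
qed

lemma shadow_relator_piece:
  assumes "U \<in> set relator_pieces"
  obtains a b where "adjacent a b" "shadow dih_id U = [a,b,a,b]"
proof -
  have "list_all (\<lambda>U. \<exists>a b. adjacent a b \<and> shadow dih_id U = [a,b,a,b]) relator_pieces"
    unfolding relator_pieces_def relator_rotations_def
    by (simp add: relator_def relator_inv_def dih_id_def side_of_int_def numeral_eq_Suc rotate_Suc
        adjacent_def)
  then show thesis using assms that by (auto simp: list_all_iff)
qed

lemma shadow_inR_eq_w0:
  assumes "inR U" "length U = 4"
  obtains h where "shadow (end_dih h w) U = w0"
proof -
  obtain a b where ab: "adjacent a b" "shadow dih_id U = [a,b,a,b]"
    using shadow_relator_piece[OF inR_in_relator_pieces[OF assms]] .
  obtain k where k: "dih_app k a = A0" "dih_app k b = A1" using dih_normalize_adjacent[OF ab(1)] .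
  define h where "h = dih_comp k (dih_inv (end_dih dih_id w))"
  have "end_dih h w = k"
    using end_dih_comp[of h dih_id w] by (simp add: h_def dih_comp_assoc)
  then have "shadow (end_dih h w) U = w0"
    using shadow_comp[of k dih_id U] ab(2) k by (simp add: w0_def)
  then show thesis using that by blast
qed

theorem geodesic_through_relator_piece:
  assumes "inR U" "length U = 4" "wlen (y @ U) = wlen y + 4"
    and "geodesic (U @ z)" "geodesic w" "geq w y"
  shows "geodesic (w @ U @ z)"
proof -
  obtain h where h: "shadow (end_dih h w) U = w0" using shadow_inR_eq_w0[OF assms(1,2)] .
  define Y Z where "Y = shadow h w" and "Z = shadow (end_dih h (w @ U)) z"
  have UZ: "shadow (end_dih h w) (U @ z) = w0 @ Z"
    unfolding Z_def by (simp add: shadow_append end_dih_append h)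
  have "cox_len (Y @ w0) = wlen (w @ U)"
    unfolding Y_def wlen_eq_cox_len_shadow[of _ h] by (simp add: shadow_append h)
  also have "\<dots> = wlen w + 4"
    using assms(3) wlen_cong[OF geq_append[OF assms(6) geq_refl]] wlen_cong[OF assms(6)] by simp
  finally have "cox_len (Y @ w0) = cox_len Y + 4" unfolding Y_def wlen_eq_cox_len_shadow[of _ h] .
  moreover have "cox_len (w0 @ Z) = 4 + length Z"
    using assms(2,4) wlen_eq_cox_len_shadow[of "U @ z" "end_dih h w"] UZ
    unfolding geodesic_def Z_def by simp
  ultimately have "cox_len (Y @ w0 @ Z) = cox_len Y + 4 + length Z" by (rule cox_len_append_w0)
  moreover have "shadow h (w @ U @ z) = Y @ w0 @ Z"
    unfolding Y_def Z_def by (simp add: shadow_append end_dih_append h)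
  ultimately show ?thesis
    using assms(2,5) wlen_eq_cox_len_shadow[of _ h] unfolding geodesic_def Y_def Z_def by simp
qed

lemma cone_eq_if_geodesics_extend:
  assumes "geodesic U" "wlen (y @ U) = wlen y + wlen U"
    and extend: "\<And>z w. geodesic (U @ z) \<Longrightarrow> geodesic w \<Longrightarrow> geq w y \<Longrightarrow> geodesic (w @ U @ z)"
  shows "cone U = cone (y @ U)"
proof (intro set_eqI iffI)
  fix z
  assume "z \<in> cone U"
  then have hz: "wlen (U @ z) = length U + wlen z" using assms(1) unfolding cone_def geodesic_def by simp
  obtain z' where z': "geq z z'" "length z' = wlen z" by (rule wlen_obtain)
  obtain w where w: "geq y w" "length w = wlen y" by (rule wlen_obtain)
  have "geodesic w" using w wlen_cong[OF w(1)] unfolding geodesic_def by simp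
  moreover have "geodesic (U @ z')"
    using hz z'(2) wlen_cong[OF geq_append[OF geq_refl z'(1)]] unfolding geodesic_def by simp
  ultimately have "geodesic (w @ U @ z')" using extend geq_sym[OF w(1)] by blast
  moreover have "wlen (y @ U @ z) = wlen (w @ U @ z')"
    by (rule wlen_cong[OF geq_append[OF w(1) geq_append[OF geq_refl z'(1)]]])
  ultimately show "z \<in> cone (y @ U)"
    using assms(1,2) w(2) z'(2) unfolding cone_def geodesic_def by simp
next
  fix z
  assume "z \<in> cone (y @ U)"
  then have "wlen (y @ U @ z) = wlen y + wlen U + wlen z" using assms(2) unfolding cone_def by simp
  moreover have "wlen (y @ (U @ z)) \<le> wlen y + wlen (U @ z)" "wlen (U @ z) \<le> wlen U + wlen z"
    by (rule wlen_append)+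
  ultimately show "z \<in> cone U" unfolding cone_def by simp
qed

theorem lemma3p3:
  fixes u1 u2 u3 u4 :: letter and y :: word
  assumes "geodesic [u1, u2, u3, u4]"
    and "inR [u1, u2, u3, u4]"
    and "\<not> geq y []"
    and "[u1, u2, u3, u4] \<in> cone y"
  shows "(\<forall>z. geodesic ([u1, u2, u3, u4] @ z) \<longrightarrow>
            (\<forall>w. geodesic w \<and> geq w y \<longrightarrow> geodesic (w @ [u1, u2, u3, u4] @ z)))
       \<and> cone [u1, u2, u3, u4] = cone (y @ [u1, u2, u3, u4])"
proof -
  let ?U = "[u1, u2, u3, u4]"
  have len: "wlen (y @ ?U) = wlen y + wlen ?U" using assms(4) unfolding cone_def by simp
  then have "wlen (y @ ?U) = wlen y + 4" using assms(1) unfolding geodesic_def by simp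
  then have extend: "geodesic (?U @ z) \<Longrightarrow> geodesic w \<Longrightarrow> geq w y \<Longrightarrow> geodesic (w @ ?U @ z)" for z w
    using geodesic_through_relator_piece[OF assms(2)] by simp
  show ?thesis using extend cone_eq_if_geodesics_extend[OF assms(1) len extend] by blast
qed

end
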